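(* Let $\mathbf f=(f_1,\dots,f_n)\in\mathcal{GEN}_n$ and let $R$ be a tournament on $[n+1]$ whose restriction to $[n]$ is $R[\mathbf f]$. For $f_{n+1}\in\mathcal G_0$ write $\mathbf f'=(f_1,\dots,f_n,f_{n+1})$. (a) The set $\{f_{n+1}\in\mathcal G_0:\mathbf f'\in\mathcal{GEN}_{n+1}\}$ is open and dense in $\mathcal G_0$. If $\mathbf f\in\mathcal{GEN}_n^+$, then $\{f_{n+1}\in\mathcal G_0:\mathbf f'\in\mathcal{GEN}_{n+1}^+\}$ is open and dense in $\mathcal G_0$. (b) The set $\{f_{n+1}\in\mathcal G_0:\mathbf f'\in\mathcal{GEN}_{n+1},\ R[\mathbf f']=R\}$ is open and nonempty in $\mathcal G_0$. (c) If $\mathbf f\in\mathcal{GEN}_n^+$, then $\{f_{n+1}\in\mathcal G_0:\mathbf f'\in\mathcal{GEN}_{n+1}^+,\ R[\mathbf f']=R\}$ is open and nonempty in $\mathcal G_0$.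
   Context: Let $\mathcal G$ be the group of strictly increasing continuous maps $f:[-1,1]\to[-1,1]$ with $f(\pm1)=\pm1$, with the sup-norm topology; $i$ is the identity; $\mathcal G_0=\{f\in\mathcal G:\int_{-1}^1 f=0\}$. $f^e(t)=\tfrac12(f(t)+f(-t))$. For $f,g\in\mathcal G$, $Q(f,g)=\int_{-1}^1 f(g^{-1}(t))\,dt$. For $\mathbf f=(f_1,\dots,f_n)\in\mathcal G^n$, $R[\mathbf f]$ is the digraph on $[n]$ with $(i,j)\in R[\mathbf f]$ iff $Q(f_j,f_i)>0$. A tournament on $I$ is a subset of $I\times I$ containing no diagonal pair and exactly one of $(i,j),(j,i)$ for each distinct $i,j$. $\mathcal{GEN}_n$ (generic $n$-tuples) is the set of $\mathbf f\in\mathcal G_0^n$ with $\{i,f_1,\dots,f_n\}$ linearly independent and $Q(f_i,f_j)\neq0$ for all $i\neq j$; $\mathcal{GEN}_n^+$ (strongly generic) is the set of $\mathbf f\in\mathcal G_0^n$ with $\{f_1^e,\dots,f_n^e\}$ linearly independent and $Q(f_i,f_j)\ne0$ for all $i\ne j$. *)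

theory Defs
  imports "HOL-Analysis.Analysis"
begin

text \<open>Functions are represented as real \<Rightarrow> real, with the
  normalising convention that they are the identity outside [-1,1], so that
  G is in bijection with the paper's group.\<close>
definition Gset :: "(real \<Rightarrow> real) set" where
  "Gset = {f. continuous_on {-1..1} f \<and> strict_mono_on {-1..1} f
              \<and> f ` {-1..1} \<subseteq> {-1..1} \<and> f (-1) = -1 \<and> f 1 = 1
              \<and> (\<forall>t. t \<notin> {-1..1} \<longrightarrow> f t = t)}"

definition G0 :: "(real \<Rightarrow> real) set" where
  "G0 = {f \<in> Gset. integral {-1..1} f = 0}"

definition supdist :: "(real \<Rightarrow> real) \<Rightarrow> (real \<Rightarrow> real) \<Rightarrow> real" where
  "supdist f g = (SUP t\<in>{-1..1}. \<bar>f t - g t\<bar>)"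

definition open_in_G0 :: "(real \<Rightarrow> real) set \<Rightarrow> bool" where
  "open_in_G0 S \<longleftrightarrow> S \<subseteq> G0 \<and>
     (\<forall>f\<in>S. \<exists>e>0. \<forall>g\<in>G0. supdist f g < e \<longrightarrow> g \<in> S)"

definition dense_in_G0 :: "(real \<Rightarrow> real) set \<Rightarrow> bool" where
  "dense_in_G0 S \<longleftrightarrow> (\<forall>f\<in>G0. \<forall>e>0. \<exists>g\<in>S. supdist f g < e)"

definition even_part :: "(real \<Rightarrow> real) \<Rightarrow> real \<Rightarrow> real" where
  "even_part f t = (f t + f (- t)) / 2"

definition Q :: "(real \<Rightarrow> real) \<Rightarrow> (real \<Rightarrow> real) \<Rightarrow> real" where
  "Q f g = integral {-1..1} (\<lambda>t. f (inv_into {-1..1} g t))"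

text \<open>Tuples (f_1,...,f_n) are functions nat \<Rightarrow> (real \<Rightarrow> real), indices 1..n.\<close>
definition GEN :: "nat \<Rightarrow> (nat \<Rightarrow> real \<Rightarrow> real) set" where
  "GEN n = {f. (\<forall>k\<in>{1..n}. f k \<in> G0)
     \<and> (\<forall>c0 c. (\<forall>t\<in>{-1..1}. c0 * t + (\<Sum>k=1..n. c k * f k t) = 0)
                \<longrightarrow> c0 = 0 \<and> (\<forall>k\<in>{1..n}. c k = 0))
     \<and> (\<forall>i\<in>{1..n}. \<forall>j\<in>{1..n}. i \<noteq> j \<longrightarrow> Q (f i) (f j) \<noteq> 0)}"

definition GENp :: "nat \<Rightarrow> (nat \<Rightarrow> real \<Rightarrow> real) set" where
  "GENp n = {f. (\<forall>k\<in>{1..n}. f k \<in> G0)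
     \<and> (\<forall>c. (\<forall>t\<in>{-1..1}. (\<Sum>k=1..n. c k * even_part (f k) t) = 0)
                \<longrightarrow> (\<forall>k\<in>{1..n}. c k = 0))
     \<and> (\<forall>i\<in>{1..n}. \<forall>j\<in>{1..n}. i \<noteq> j \<longrightarrow> Q (f i) (f j) \<noteq> 0)}"

definition Rel :: "nat \<Rightarrow> (nat \<Rightarrow> real \<Rightarrow> real) \<Rightarrow> (nat \<times> nat) set" where
  "Rel n f = {(i, j). i \<in> {1..n} \<and> j \<in> {1..n} \<and> Q (f j) (f i) > 0}"

definition tournament :: "'a set \<Rightarrow> ('a \<times> 'a) set \<Rightarrow> bool" where
  "tournament I R \<longleftrightarrow> R \<subseteq> I \<times> I \<and> (\<forall>i. (i, i) \<notin> R)
     \<and> (\<forall>i\<in>I. \<forall>j\<in>I. i \<noteq> j \<longrightarrow> ((i, j) \<in> R \<longleftrightarrow> (j, i) \<notin> R))"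

end

theory Submission
  imports Defs
begin

definition inc_homeo :: "(real \<Rightarrow> real) \<Rightarrow> bool" where
  "inc_homeo p \<longleftrightarrow> continuous_on {-1..1} p \<and> strict_mono_on {-1..1} p \<and> p (-1) = -1 \<and> p 1 = 1"

abbreviation hinv :: "(real \<Rightarrow> real) \<Rightarrow> real \<Rightarrow> real" where
  "hinv p \<equiv> inv_into {-1..1} p"

lemma inc_homeo_cont: "inc_homeo p \<Longrightarrow> continuous_on {-1..1} p"
  by (simp add: inc_homeo_def)

lemma inc_homeo_less_iff:
  assumes "inc_homeo p" "s \<in> {-1..1}" "t \<in> {-1..1}"
  shows "p s < p t \<longleftrightarrow> s < t"
  using assms unfolding inc_homeo_def by (metis linorder_not_le order_le_less strict_mono_onD)

lemma inc_homeo_le_iff: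
  assumes "inc_homeo p" "s \<in> {-1..1}" "t \<in> {-1..1}"
  shows "p s \<le> p t \<longleftrightarrow> s \<le> t"
  using inc_homeo_less_iff[OF assms(1,3,2)] by linarith

lemma inc_homeo_maps:
  assumes "inc_homeo p" "s \<in> {-1..1}"
  shows "p s \<in> {-1..1}"
proof -
  have "p (-1) \<le> p s" "p s \<le> p 1"
    using inc_homeo_le_iff[OF assms(1)] assms(2) by auto
  then show ?thesis using assms(1) by (simp add: inc_homeo_def)
qed

lemma inc_homeo_image:
  assumes "inc_homeo p"
  shows "p ` {-1..1} = {-1..1}"
proof
  show "p ` {-1..1} \<subseteq> {-1..1}" using inc_homeo_maps[OF assms] by auto
  show "{-1..1} \<subseteq> p ` {-1..1}"
  proof
    fix y :: real assume "y \<in> {-1..1}"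
    then have "\<exists>x. -1 \<le> x \<and> x \<le> 1 \<and> p x = y"
      using assms by (intro IVT') (auto simp: inc_homeo_def)
    then show "y \<in> p ` {-1..1}" by auto
  qed
qed

lemma hinv_maps: "inc_homeo p \<Longrightarrow> t \<in> {-1..1} \<Longrightarrow> hinv p t \<in> {-1..1}"
  by (metis inc_homeo_image inv_into_into)

lemma hinv_right: "inc_homeo p \<Longrightarrow> t \<in> {-1..1} \<Longrightarrow> p (hinv p t) = t"
  by (metis inc_homeo_image f_inv_into_f)

lemma hinv_left: "inc_homeo p \<Longrightarrow> s \<in> {-1..1} \<Longrightarrow> hinv p (p s) = s"
  by (metis inc_homeo_def inv_into_f_f strict_mono_on_imp_inj_on)

lemma inc_homeo_hinv:
  assumes p: "inc_homeo p"
  shows "inc_homeo (hinv p)"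
proof -
  have "continuous_on (p ` {-1..1}) (hinv p)"
    using p by (intro continuous_on_inv) (auto simp: inc_homeo_def hinv_left)
  moreover have "strict_mono_on {-1..1} (hinv p)"
  proof (rule strict_mono_onI)
    fix r s :: real assume "r \<in> {-1..1}" "s \<in> {-1..1}" "r < s"
    then show "hinv p r < hinv p s"
      using inc_homeo_less_iff[OF p hinv_maps[OF p] hinv_maps[OF p], of r s] hinv_right[OF p] by simp
  qed
  moreover have "hinv p (-1) = -1" "hinv p 1 = 1"
    using hinv_left[OF p, of "-1"] hinv_left[OF p, of 1] p by (auto simp: inc_homeo_def)
  ultimately show ?thesis using inc_homeo_image[OF p] by (simp add: inc_homeo_def)
qed

lemma inc_homeo_id: "inc_homeo (\<lambda>t. t)"
  unfolding inc_homeo_def by (auto intro: strict_mono_onI continuous_intros)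

lemma inc_homeo_comp:
  assumes p: "inc_homeo p" and q: "inc_homeo q"
  shows "inc_homeo (\<lambda>t. p (q t))"
proof -
  have "continuous_on {-1..1} (\<lambda>t. p (q t))"
    using p q inc_homeo_maps[OF q]
    by (intro continuous_on_compose2[of "{-1..1}" p "{-1..1}" q]) (auto simp: inc_homeo_def)
  moreover have "strict_mono_on {-1..1} (\<lambda>t. p (q t))"
    by (rule strict_mono_onI) (simp add: inc_homeo_less_iff[OF p inc_homeo_maps[OF q] inc_homeo_maps[OF q]] inc_homeo_less_iff[OF q])
  ultimately show ?thesis using p q by (simp add: inc_homeo_def)
qed

lemma cont_comp_hinv:
  fixes h :: "real \<Rightarrow> real"
  assumes "inc_homeo p" "continuous_on {-1..1} h"
  shows "continuous_on {-1..1} (\<lambda>t. h (hinv p t))"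
  using assms hinv_maps[OF assms(1)] inc_homeo_cont[OF inc_homeo_hinv[OF assms(1)]]
  by (intro continuous_on_compose2[of "{-1..1}" h "{-1..1}" "hinv p"]) auto

lemma integrable_comp_hinv:
  fixes h :: "real \<Rightarrow> real"
  assumes "inc_homeo p" "continuous_on {-1..1} h"
  shows "(\<lambda>t. h (hinv p t)) integrable_on {-1..1}"
  by (intro integrable_continuous_real cont_comp_hinv[OF assms])

lemma integral_inc_homeo_bounds:
  assumes "inc_homeo p" "-1 \<le> a" "a \<le> b" "b \<le> 1"
  shows "(b - a) * p a \<le> integral {a..b} p" "integral {a..b} p \<le> (b - a) * p b"
proof -
  have i: "p integrable_on {a..b}"
    using assms by (intro integrable_continuous_real continuous_on_subset[OF inc_homeo_cont]) auto
  have "integral {a..b} (\<lambda>_. p a) \<le> integral {a..b} p" "integral {a..b} p \<le> integral {a..b} (\<lambda>_. p b)"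
    by (intro integral_le i integrable_const_ivl; use assms inc_homeo_le_iff[OF assms(1)] in auto)+
  moreover have "integral {a..b} (\<lambda>_. c) = (b - a) * c" for c
    using assms by simp
  ultimately show "(b - a) * p a \<le> integral {a..b} p" "integral {a..b} p \<le> (b - a) * p b"
    using assms by (simp_all add: mult.commute)
qed

definition young_defect :: "(real \<Rightarrow> real) \<Rightarrow> real \<Rightarrow> real" where
  "young_defect p x = integral {-1..x} p + integral {-1..p x} (hinv p) - x * p x"

text \<open>Both integrals over a step from \<open>a\<close> to \<open>b\<close> are squeezed between the areas of
  the inner and outer rectangles of the graph, whose difference is \<open>(b - a) * (p b - p a)\<close>.\<close>
lemma young_defect_step:
  assumes p: "inc_homeo p" and ab: "-1 \<le> a" "a \<le> b" "b \<le> 1"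
  shows "\<bar>young_defect p b - young_defect p a\<bar> \<le> (b - a) * (p b - p a)"
proof -
  have q: "inc_homeo (hinv p)" by (rule inc_homeo_hinv[OF p])
  have pab: "p a \<in> {-1..1}" "p b \<in> {-1..1}" "p a \<le> p b"
    using ab inc_homeo_maps[OF p] inc_homeo_le_iff[OF p] by auto
  have int_p: "integral {-1..a} p + integral {a..b} p = integral {-1..b} p"
    using ab by (intro Henstock_Kurzweil_Integration.integral_combine integrable_continuous_real
        continuous_on_subset[OF inc_homeo_cont[OF p]]) auto
  have int_q: "integral {-1..p a} (hinv p) + integral {p a..p b} (hinv p) = integral {-1..p b} (hinv p)"
    using pab by (intro Henstock_Kurzweil_Integration.integral_combine integrable_continuous_real
        continuous_on_subset[OF inc_homeo_cont[OF q]]) auto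
  note bp = integral_inc_homeo_bounds[OF p ab]
  note bq = integral_inc_homeo_bounds[OF q, of "p a" "p b"]
  have "hinv p (p a) = a" "hinv p (p b) = b" using hinv_left[OF p] ab by auto
  then have bq': "(p b - p a) * a \<le> integral {p a..p b} (hinv p)"
    "integral {p a..p b} (hinv p) \<le> (p b - p a) * b"
    using bq pab by auto
  have d: "young_defect p b - young_defect p a
      = integral {a..b} p + integral {p a..p b} (hinv p) - (b * p b - a * p a)"
    unfolding young_defect_def using int_p int_q by linarith
  have e1: "(b - a) * p a + (p b - p a) * a - (b * p b - a * p a) = - ((b - a) * (p b - p a))"
    by (simp add: algebra_simps)
  have e2: "(b - a) * p b + (p b - p a) * b - (b * p b - a * p a) = (b - a) * (p b - p a)"
    by (simp add: algebra_simps)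
  have "young_defect p b - young_defect p a \<le> (b - a) * (p b - p a)"
    using d e2 bp(2) bq'(2) by linarith
  moreover have "- ((b - a) * (p b - p a)) \<le> young_defect p b - young_defect p a"
    using d e1 bp(1) bq'(1) by linarith
  ultimately show ?thesis by (simp add: abs_le_iff)
qed

lemma young_defect_diff_le:
  assumes p: "inc_homeo p" and "x \<in> {-1..1}" "y \<in> {-1..1}"
  shows "\<bar>young_defect p y - young_defect p x\<bar> \<le> \<bar>y - x\<bar> * \<bar>p y - p x\<bar>"
proof (cases "x \<le> y")
  case True
  then show ?thesis
    using young_defect_step[OF p, of x y] assms inc_homeo_le_iff[OF p, of x y] by auto
next
  case False
  then show ?thesis
    using young_defect_step[OF p, of y x] assms inc_homeo_le_iff[OF p, of y x]
    by (auto simp: abs_minus_commute)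
qed

lemma young_defect_deriv:
  assumes p: "inc_homeo p" and x: "x \<in> {-1..1}"
  shows "(young_defect p has_field_derivative 0) (at x within {-1..1})"
proof -
  let ?D = "young_defect p"
  have "\<forall>\<^sub>F y in at x within {-1..1}. norm ((?D y - ?D x) / (y - x)) \<le> \<bar>p y - p x\<bar>"
    unfolding eventually_at_filter
  proof (rule always_eventually, intro allI impI)
    fix y assume "y \<noteq> x" "y \<in> {-1..1::real}"
    then show "norm ((?D y - ?D x) / (y - x)) \<le> \<bar>p y - p x\<bar>"
      using young_defect_diff_le[OF p x] by (simp add: abs_divide divide_le_eq mult.commute)
  qed
  moreover have "(p \<longlongrightarrow> p x) (at x within {-1..1})"
    using inc_homeo_cont[OF p] x by (simp add: continuous_on_def)
  then have "((\<lambda>y. \<bar>p y - p x\<bar>) \<longlongrightarrow> \<bar>p x - p x\<bar>) (at x within {-1..1})"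
    by (intro tendsto_intros)
  then have "((\<lambda>y. \<bar>p y - p x\<bar>) \<longlongrightarrow> 0) (at x within {-1..1})" by simp
  ultimately have "((\<lambda>y. (?D y - ?D x) / (y - x)) \<longlongrightarrow> 0) (at x within {-1..1})"
    by (rule Lim_null_comparison)
  then show ?thesis by (simp add: has_field_derivative_iff)
qed

text \<open>Young's identity for an increasing homeomorphism of \<open>[-1, 1]\<close>: the areas under the
  graphs of \<open>p\<close> and \<open>p\<inverse>\<close> add up to that of the square.\<close>
lemma integral_add_integral_hinv:
  assumes p: "inc_homeo p"
  shows "integral {-1..1} p + integral {-1..1} (hinv p) = 0"
proof -
  obtain c where "\<forall>x\<in>{-1..1::real}. young_defect p x = c"
    using has_field_derivative_zero_constant[of "{-1..1::real}" "young_defect p"]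
      young_defect_deriv[OF p] by auto
  then have "young_defect p 1 = young_defect p (-1)" by auto
  then show ?thesis using p by (simp add: young_defect_def inc_homeo_def)
qed

lemma Q_antisym:
  assumes f: "inc_homeo f" and g: "inc_homeo g"
  shows "Q f g = - Q g f"
proof -
  let ?p = "\<lambda>t. f (hinv g t)"
  have p: "inc_homeo ?p" by (rule inc_homeo_comp[OF f inc_homeo_hinv[OF g]])
  have "hinv ?p t = g (hinv f t)" if t: "t \<in> {-1..1}" for t
  proof -
    have "hinv ?p (?p (g (hinv f t))) = g (hinv f t)"
      by (rule hinv_left[OF p inc_homeo_maps[OF g hinv_maps[OF f t]]])
    then show ?thesis using hinv_left[OF g hinv_maps[OF f t]] hinv_right[OF f t] by simp
  qed
  then have "integral {-1..1} (hinv ?p) = Q g f"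
    unfolding Q_def by (rule integral_cong)
  then show ?thesis using integral_add_integral_hinv[OF p] by (simp add: Q_def)
qed

lemma G0_inc_homeo: "g \<in> G0 \<Longrightarrow> inc_homeo g"
  by (simp add: G0_def Gset_def inc_homeo_def)

lemma G0_cont: "g \<in> G0 \<Longrightarrow> continuous_on {-1..1} g"
  by (simp add: G0_def Gset_def)

lemma G0_integral: "g \<in> G0 \<Longrightarrow> integral {-1..1} g = 0"
  by (simp add: G0_def)

lemma G0_integral_hinv: "g \<in> G0 \<Longrightarrow> integral {-1..1} (hinv g) = 0"
  using integral_add_integral_hinv[OF G0_inc_homeo] G0_integral by fastforce

lemma integral_id_sym: "integral {-1..1} (\<lambda>t::real. t) = 0"
proof -
  have "integral {-1..1} (hinv (\<lambda>t. t)) = integral {-1..1} (\<lambda>t::real. t)"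
    by (rule integral_cong) (use hinv_left[OF inc_homeo_id] in simp)
  then show ?thesis using integral_add_integral_hinv[OF inc_homeo_id] by simp
qed

lemma id_G0: "(\<lambda>t. t) \<in> G0"
proof -
  have "(\<lambda>t. t) \<in> Gset"
    unfolding Gset_def by (auto intro: strict_mono_onI continuous_intros)
  then show ?thesis using integral_id_sym by (simp add: G0_def)
qed

lemma Q_antisym_G0: "f \<in> G0 \<Longrightarrow> g \<in> G0 \<Longrightarrow> Q f g = - Q g f"
  by (intro Q_antisym G0_inc_homeo)

lemma supdist_le: "(\<And>t. t \<in> {-1..1} \<Longrightarrow> \<bar>f t - g t\<bar> \<le> B) \<Longrightarrow> supdist f g \<le> B"
  unfolding supdist_def by (rule cSUP_least) auto

lemma abs_le_supdist:
  assumes "f \<in> G0" "g \<in> G0" "t \<in> {-1..1}"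
  shows "\<bar>f t - g t\<bar> \<le> supdist f g"
  unfolding supdist_def
proof (rule cSUP_upper[OF assms(3)])
  have "\<bar>f s - g s\<bar> \<le> 2" if "s \<in> {-1..1}" for s
    using inc_homeo_maps[OF G0_inc_homeo[OF assms(1)] that]
      inc_homeo_maps[OF G0_inc_homeo[OF assms(2)] that] by auto
  then show "bdd_above ((\<lambda>t. \<bar>f t - g t\<bar>) ` {-1..1})" by (intro bdd_aboveI2)
qed

definition lerp :: "real \<Rightarrow> (real \<Rightarrow> real) \<Rightarrow> (real \<Rightarrow> real) \<Rightarrow> real \<Rightarrow> real" where
  "lerp s a b t = (1 - s) * a t + s * b t"

lemma lerp_G0:
  assumes a: "a \<in> G0" and b: "b \<in> G0" and s: "0 \<le> s" "s \<le> 1"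
  shows "lerp s a b \<in> G0"
proof -
  have ai: "inc_homeo a" and bi: "inc_homeo b" using a b by (simp_all add: G0_inc_homeo)
  have cont: "continuous_on {-1..1} (lerp s a b)"
    unfolding lerp_def[abs_def] using G0_cont[OF a] G0_cont[OF b] by (intro continuous_intros)
  have mono: "strict_mono_on {-1..1} (lerp s a b)"
  proof (rule strict_mono_onI)
    fix x y :: real assume xy: "x \<in> {-1..1}" "y \<in> {-1..1}" "x < y"
    then have "a x < a y" "b x < b y"
      using inc_homeo_less_iff[OF ai xy(1,2)] inc_homeo_less_iff[OF bi xy(1,2)] by auto
    then have "(1 - s) * a x \<le> (1 - s) * a y" "s * b x \<le> s * b y"
      "(1 - s) * a x < (1 - s) * a y \<or> s * b x < s * b y"
      using s by (auto simp: mult_left_mono) (cases "s < 1"; simp)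
    then show "lerp s a b x < lerp s a b y" unfolding lerp_def by linarith
  qed
  have ends: "lerp s a b (-1) = -1" "lerp s a b 1 = 1"
    using ai bi by (auto simp: inc_homeo_def lerp_def algebra_simps)
  then have maps: "lerp s a b ` {-1..1} \<subseteq> {-1..1}"
    using inc_homeo_maps[of "lerp s a b"] cont mono by (auto simp: inc_homeo_def)
  have "integral {-1..1} (lerp s a b) = (1 - s) * integral {-1..1} a + s * integral {-1..1} b"
    unfolding lerp_def[abs_def] using G0_cont[OF a] G0_cont[OF b]
    by (subst integral_add) (auto intro!: integrable_continuous_real continuous_intros)
  then show ?thesis
    using a b cont mono ends maps by (auto simp: G0_def Gset_def lerp_def algebra_simps)
qed

lemma supdist_lerp:
  assumes a: "a \<in> G0" and b: "b \<in> G0" and s: "0 \<le> s"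
  shows "supdist a (lerp s a b) \<le> 2 * s"
proof (rule supdist_le)
  fix t :: real assume t: "t \<in> {-1..1}"
  have "\<bar>a t - b t\<bar> \<le> 2"
    using inc_homeo_maps[OF G0_inc_homeo[OF a] t] inc_homeo_maps[OF G0_inc_homeo[OF b] t] by auto
  moreover have "a t - lerp s a b t = s * (a t - b t)" by (simp add: lerp_def algebra_simps)
  ultimately show "\<bar>a t - lerp s a b t\<bar> \<le> 2 * s"
    using s by (simp add: abs_mult mult_left_mono mult.commute)
qed

lemma Q_lincomb:
  assumes "continuous_on {-1..1} a" "continuous_on {-1..1} b" "inc_homeo p"
  shows "Q (\<lambda>t. x * a t + y * b t) p = x * Q a p + y * Q b p"
proof -
  have "(\<lambda>t. a (hinv p t)) integrable_on {-1..1}" "(\<lambda>t. b (hinv p t)) integrable_on {-1..1}"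
    using assms by (simp_all add: integrable_comp_hinv)
  then show ?thesis
    unfolding Q_def by (subst integral_add) (auto intro: integrable_on_mult_right)
qed

lemma Q_lerp:
  assumes "a \<in> G0" "b \<in> G0" "p \<in> G0"
  shows "Q (lerp s a b) p = (1 - s) * Q a p + s * Q b p"
  using Q_lincomb[OF G0_cont G0_cont G0_inc_homeo] assms by (simp add: lerp_def[abs_def])

lemma Q_diff_le_supdist:
  assumes g: "g \<in> G0" and g': "g' \<in> G0" and p: "p \<in> G0"
  shows "\<bar>Q g p - Q g' p\<bar> \<le> 2 * supdist g g'"
proof -
  have pi: "inc_homeo p" by (rule G0_inc_homeo[OF p])
  have i: "(\<lambda>t. g (hinv p t)) integrable_on {-1..1}" "(\<lambda>t. g' (hinv p t)) integrable_on {-1..1}"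
    using integrable_comp_hinv[OF pi G0_cont] g g' by auto
  have "norm (integral {-1..1} (\<lambda>t. g (hinv p t) - g' (hinv p t)))
      \<le> integral {-1..1} (\<lambda>t::real. supdist g g')"
    using abs_le_supdist[OF g g' hinv_maps[OF pi]]
    by (intro integral_norm_bound_integral integrable_diff i) auto
  moreover have "Q g p - Q g' p = integral {-1..1} (\<lambda>t. g (hinv p t) - g' (hinv p t))"
    unfolding Q_def using integral_diff[OF i] by simp
  ultimately show ?thesis by simp
qed

lemma even_part_cont:
  assumes g: "continuous_on {-1..1} g"
  shows "continuous_on {-1..1} (even_part g)"
proof -
  have "continuous_on {-1..1} (\<lambda>t. g (- t))"
    by (rule continuous_on_compose2[OF g]) (auto intro: continuous_intros)
  then show ?thesis unfolding even_part_def[abs_def] using g by (intro continuous_intros) auto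
qed

lemma even_part_lerp: "even_part (lerp s a b) = lerp s (even_part a) (even_part b)"
  by (auto simp: even_part_def lerp_def field_simps)

definition open_cond :: "((real \<Rightarrow> real) \<Rightarrow> bool) \<Rightarrow> bool" where
  "open_cond P \<longleftrightarrow> open_in_G0 {g \<in> G0. P g}"

lemma open_cond_def':
  "open_cond P \<longleftrightarrow> (\<forall>g\<in>G0. P g \<longrightarrow> (\<exists>e>0. \<forall>g'\<in>G0. supdist g g' < e \<longrightarrow> P g'))"
  unfolding open_cond_def open_in_G0_def by auto

lemma open_cond_conj:
  assumes "open_cond P" "open_cond R"
  shows "open_cond (\<lambda>g. P g \<and> R g)"
  unfolding open_cond_def'
proof (intro ballI impI)
  fix g assume "g \<in> G0" "P g \<and> R g"
  then obtain e1 e2 where "e1 > 0" "\<forall>g'\<in>G0. supdist g g' < e1 \<longrightarrow> P g'"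
    and "e2 > 0" "\<forall>g'\<in>G0. supdist g g' < e2 \<longrightarrow> R g'"
    using assms unfolding open_cond_def' by meson
  then show "\<exists>e>0. \<forall>g'\<in>G0. supdist g g' < e \<longrightarrow> P g' \<and> R g'"
    by (intro exI[of _ "min e1 e2"]) auto
qed

lemma open_cond_disj: "open_cond P \<Longrightarrow> open_cond R \<Longrightarrow> open_cond (\<lambda>g. P g \<or> R g)"
  unfolding open_cond_def' by blast

lemma open_cond_ball:
  "finite I \<Longrightarrow> (\<And>i. i \<in> I \<Longrightarrow> open_cond (P i)) \<Longrightarrow> open_cond (\<lambda>g. \<forall>i\<in>I. P i g)"
proof (induction I rule: finite_induct)
  case empty
  then show ?case unfolding open_cond_def' by (auto intro: exI[of _ 1])
next
  case (insert a I)
  then show ?case using open_cond_conj[of "P a" "\<lambda>g. \<forall>i\<in>I. P i g"] by simp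
qed

lemma open_cond_pos:
  assumes "\<And>g g'. g \<in> G0 \<Longrightarrow> g' \<in> G0 \<Longrightarrow> \<bar>F g - F g'\<bar> \<le> C * supdist g g'" "C > 0"
  shows "open_cond (\<lambda>g. F g > 0)"
  unfolding open_cond_def'
proof (intro ballI impI)
  fix g assume g: "g \<in> G0" and pos: "F g > 0"
  have "F g' > 0" if "g' \<in> G0" "supdist g g' < F g / C" for g'
    using assms(1)[OF g that(1)] that(2) \<open>C > 0\<close>
    by (simp add: pos_less_divide_eq mult.commute abs_le_iff)
  then show "\<exists>e>0. \<forall>g'\<in>G0. supdist g g' < e \<longrightarrow> F g' > 0"
    using pos \<open>C > 0\<close> by (intro exI[of _ "F g / C"]) auto
qed

definition has_sign :: "bool \<Rightarrow> real \<Rightarrow> bool" where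
  "has_sign pos x \<longleftrightarrow> (if pos then x > 0 else x < 0)"

lemma has_sign_nonzero: "has_sign pos x \<Longrightarrow> x \<noteq> 0"
  by (auto simp: has_sign_def split: if_splits)

lemma open_cond_Q_sign:
  assumes p: "p \<in> G0"
  shows "open_cond (\<lambda>g. has_sign pos (Q g p))"
proof -
  have "open_cond (\<lambda>g. c * Q g p > 0)" if "\<bar>c\<bar> = 1" for c :: real
    using Q_diff_le_supdist[OF _ _ p] that
    by (intro open_cond_pos[where C = 2]) (auto simp: right_diff_distrib[symmetric] abs_mult)
  from this[of 1] this[of "-1"] show ?thesis
    by (cases pos) (simp_all add: has_sign_def)
qed

lemma open_cond_Q_nonzero: "p \<in> G0 \<Longrightarrow> open_cond (\<lambda>g. Q g p \<noteq> 0)"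
  using open_cond_disj[OF open_cond_Q_sign[of p True] open_cond_Q_sign[of p False]]
  by (simp add: has_sign_def neq_iff disj_commute)

locale functionals_on_subspace =
  fixes H :: "(real \<Rightarrow> real) set" and L :: "'i \<Rightarrow> (real \<Rightarrow> real) \<Rightarrow> real"
  assumes zero_in: "(\<lambda>t. 0) \<in> H"
    and add_in: "\<And>x y. x \<in> H \<Longrightarrow> y \<in> H \<Longrightarrow> (\<lambda>t. x t + y t) \<in> H"
    and scale_in: "\<And>c x. x \<in> H \<Longrightarrow> (\<lambda>t. c * x t) \<in> H"
    and L_add: "\<And>j x y. x \<in> H \<Longrightarrow> y \<in> H \<Longrightarrow> L j (\<lambda>t. x t + y t) = L j x + L j y"
    and L_scale: "\<And>j c x. x \<in> H \<Longrightarrow> L j (\<lambda>t. c * x t) = c * L j x"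
begin

definition dependent :: "'i set \<Rightarrow> bool" where
  "dependent K \<longleftrightarrow> (\<exists>c. (\<exists>j\<in>K. c j \<noteq> 0) \<and> (\<forall>x\<in>H. (\<Sum>j\<in>K. c j * L j x) = 0))"

definition jointly_surj :: "'i set \<Rightarrow> bool" where
  "jointly_surj K \<longleftrightarrow> (\<forall>y. \<exists>x\<in>H. \<forall>j\<in>K. L j x = y j)"

lemma lincomb_in: "x \<in> H \<Longrightarrow> y \<in> H \<Longrightarrow> (\<lambda>t. x t + c * y t) \<in> H"
  by (intro add_in scale_in)

lemma L_lincomb: "x \<in> H \<Longrightarrow> y \<in> H \<Longrightarrow> L j (\<lambda>t. x t + c * y t) = L j x + c * L j y"
  by (simp add: L_add L_scale scale_in)

lemma sum_in: "finite I \<Longrightarrow> (\<And>k. k \<in> I \<Longrightarrow> b k \<in> H) \<Longrightarrow> (\<lambda>t. \<Sum>k\<in>I. a k * b k t) \<in> H"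
  by (induction I rule: finite_induct) (auto simp: zero_in intro!: add_in scale_in)

lemma L_sum:
  "finite I \<Longrightarrow> (\<And>k. k \<in> I \<Longrightarrow> b k \<in> H) \<Longrightarrow> L j (\<lambda>t. \<Sum>k\<in>I. a k * b k t) = (\<Sum>k\<in>I. a k * L j (b k))"
proof (induction I rule: finite_induct)
  case empty
  then show ?case using L_scale[OF zero_in, of j 0] by simp
next
  case (insert m I)
  then show ?case by (simp add: L_add L_scale scale_in sum_in)
qed

lemma ex_unit_preimages:
  assumes "jointly_surj K"
  obtains e where "\<And>k. e k \<in> H" "\<And>k j. j \<in> K \<Longrightarrow> L j (e k) = (if j = k then 1 else 0)"
proof -
  have "\<forall>k. \<exists>x\<in>H. \<forall>j\<in>K. L j x = (if j = k then 1 else 0)"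
  proof
    fix k show "\<exists>x\<in>H. \<forall>j\<in>K. L j x = (if j = k then 1 else 0)"
      using assms unfolding jointly_surj_def by (rule allE[of _ "\<lambda>j. if j = k then 1 else 0"])
  qed
  then show ?thesis using that by metis
qed

lemma dependent_insert:
  assumes "dependent K" "finite K" "m \<notin> K"
  shows "dependent (insert m K)"
proof -
  obtain c where c: "\<exists>j\<in>K. c j \<noteq> 0" "\<forall>x\<in>H. (\<Sum>j\<in>K. c j * L j x) = 0"
    using assms(1) unfolding dependent_def by blast
  have "(\<Sum>j\<in>insert m K. (c(m := 0)) j * L j x) = (\<Sum>j\<in>K. c j * L j x)" for x
    using assms(2,3) by (auto intro: sum.cong)
  moreover have "\<exists>j\<in>insert m K. (c(m := 0)) j \<noteq> 0"
    using c(1) assms(3) by force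
  ultimately show ?thesis
    using c(2) unfolding dependent_def by (intro exI[of _ "c(m := 0)"]) auto
qed

lemma jointly_surj_insert:
  assumes surj: "jointly_surj K"
    and z: "z1 \<in> H" "z2 \<in> H" "\<forall>j\<in>K. L j z1 = L j z2" "L m z1 \<noteq> L m z2"
  shows "jointly_surj (insert m K)"
  unfolding jointly_surj_def
proof
  fix y
  obtain x where x: "x \<in> H" "\<forall>j\<in>K. L j x = y j"
    using surj unfolding jointly_surj_def by blast
  define u where "u = (\<lambda>t. z1 t + (-1) * z2 t)"
  have "L j u = L j z1 - L j z2" for j
    unfolding u_def L_lincomb[OF z(1,2)] by simp
  moreover have "u \<in> H" unfolding u_def by (rule lincomb_in[OF z(1,2)])
  ultimately have u: "u \<in> H" "\<forall>j\<in>K. L j u = 0" "L m u \<noteq> 0"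
    using z by simp_all
  define a where "a = (y m - L m x) / L m u"
  have "\<forall>j\<in>insert m K. L j (\<lambda>t. x t + a * u t) = y j"
    using x u unfolding L_lincomb[OF x(1) u(1)] by (auto simp: a_def)
  then show "\<exists>x\<in>H. \<forall>j\<in>insert m K. L j x = y j"
    using x u lincomb_in by blast
qed

text \<open>If \<open>L m\<close> is a function of the \<open>L j\<close>, \<open>j \<in> K\<close>, then evaluating it on the preimages
  \<open>e k\<close> of the unit vectors exhibits it as a linear combination of them.\<close>
lemma dependent_if_determined:
  assumes K: "finite K" "m \<notin> K" and surj: "jointly_surj K"
    and det: "\<And>z1 z2. z1 \<in> H \<Longrightarrow> z2 \<in> H \<Longrightarrow> \<forall>j\<in>K. L j z1 = L j z2 \<Longrightarrow> L m z1 = L m z2"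
  shows "dependent (insert m K)"
proof -
  obtain e where e: "\<And>k. e k \<in> H" "\<And>k j. j \<in> K \<Longrightarrow> L j (e k) = (if j = k then 1 else 0)"
    using ex_unit_preimages[OF surj] by blast
  have expand: "L m z = (\<Sum>k\<in>K. L k z * L m (e k))" if z: "z \<in> H" for z
  proof -
    let ?w = "\<lambda>t. \<Sum>k\<in>K. L k z * e k t"
    have "L j ?w = L j z" if j: "j \<in> K" for j
    proof -
      have "L j ?w = (\<Sum>k\<in>K. L k z * (if j = k then 1 else 0))"
        using K e(2)[OF j] by (simp add: L_sum e(1))
      then show ?thesis using j K by (simp add: if_distrib cong: if_cong)
    qed
    then have "L m z = L m ?w" using det[OF z sum_in[OF K(1) e(1)]] by simp
    then show ?thesis using K e by (simp add: L_sum)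
  qed
  have "\<forall>x\<in>H. (\<Sum>j\<in>insert m K. (if j = m then -1 else L m (e j)) * L j x) = 0"
  proof
    fix x assume "x \<in> H"
    have "(\<Sum>j\<in>K. (if j = m then -1 else L m (e j)) * L j x) = (\<Sum>k\<in>K. L k x * L m (e k))"
      using K by (intro sum.cong) auto
    then show "(\<Sum>j\<in>insert m K. (if j = m then -1 else L m (e j)) * L j x) = 0"
      using K expand[OF \<open>x \<in> H\<close>] by simp
  qed
  then show ?thesis unfolding dependent_def by (intro exI[of _ "\<lambda>j. if j = m then -1 else L m (e j)"]) auto
qed

lemma dependent_or_jointly_surj: "finite K \<Longrightarrow> dependent K \<or> jointly_surj K"
proof (induction K rule: finite_induct)
  case empty
  then show ?case using zero_in unfolding jointly_surj_def by blast
next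
  case (insert m K)
  consider "dependent K" | "jointly_surj K" "\<exists>z1\<in>H. \<exists>z2\<in>H. (\<forall>j\<in>K. L j z1 = L j z2) \<and> L m z1 \<noteq> L m z2"
    | "jointly_surj K" "\<And>z1 z2. z1 \<in> H \<Longrightarrow> z2 \<in> H \<Longrightarrow> \<forall>j\<in>K. L j z1 = L j z2 \<Longrightarrow> L m z1 = L m z2"
    using insert.IH by blast
  then show ?case
    by cases (use insert.hyps dependent_insert jointly_surj_insert dependent_if_determined in blast)+
qed

end

definition lin_indep_on :: "'i set \<Rightarrow> ('i \<Rightarrow> real \<Rightarrow> real) \<Rightarrow> bool" where
  "lin_indep_on K p \<longleftrightarrow> (\<forall>c. (\<forall>t\<in>{-1..1}. (\<Sum>k\<in>K. c k * p k t) = 0) \<longrightarrow> (\<forall>k\<in>K. c k = 0))"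

definition in_span :: "'i set \<Rightarrow> ('i \<Rightarrow> real \<Rightarrow> real) \<Rightarrow> (real \<Rightarrow> real) \<Rightarrow> bool" where
  "in_span K p u \<longleftrightarrow> (\<exists>c. \<forall>t\<in>{-1..1}. u t = (\<Sum>k\<in>K. c k * p k t))"

lemma lin_indep_on_cong: "(\<And>k. k \<in> K \<Longrightarrow> p k = q k) \<Longrightarrow> lin_indep_on K p = lin_indep_on K q"
  unfolding lin_indep_on_def by (metis (no_types, lifting) sum.cong)

lemma in_span_lincomb:
  assumes "in_span K p a" "in_span K p b"
  shows "in_span K p (\<lambda>t. x * a t + y * b t)"
proof -
  obtain c d where "\<forall>t\<in>{-1..1}. a t = (\<Sum>k\<in>K. c k * p k t)" "\<forall>t\<in>{-1..1}. b t = (\<Sum>k\<in>K. d k * p k t)"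
    using assms unfolding in_span_def by blast
  then have "\<forall>t\<in>{-1..1}. x * a t + y * b t = (\<Sum>k\<in>K. (x * c k + y * d k) * p k t)"
    by (simp add: sum_distrib_left sum.distrib algebra_simps)
  then show ?thesis unfolding in_span_def by (intro exI[of _ "\<lambda>k. x * c k + y * d k"])
qed

lemma lin_indep_on_insert_iff:
  assumes K: "finite K" "m \<notin> K" and indep: "lin_indep_on K p"
  shows "lin_indep_on (insert m K) (p(m := u)) \<longleftrightarrow> \<not> in_span K p u"
proof -
  have sum_insert: "(\<Sum>k\<in>insert m K. c k * (p(m := u)) k t) = c m * u t + (\<Sum>k\<in>K. c k * p k t)" for c t
  proof -
    have "(\<Sum>k\<in>K. c k * (p(m := u)) k t) = (\<Sum>k\<in>K. c k * p k t)"
      using K by (intro sum.cong) auto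
    then show ?thesis using K by simp
  qed
  show ?thesis
  proof
    assume A: "lin_indep_on (insert m K) (p(m := u))"
    show "\<not> in_span K p u"
    proof
      assume "in_span K p u"
      then obtain c where "\<forall>t\<in>{-1..1}. u t = (\<Sum>k\<in>K. c k * p k t)" unfolding in_span_def by blast
      moreover have "(\<Sum>k\<in>K. (c(m := -1)) k * p k t) = (\<Sum>k\<in>K. c k * p k t)" for t
        using K by (intro sum.cong) auto
      ultimately have "\<forall>t\<in>{-1..1}. (\<Sum>k\<in>insert m K. (c(m := -1)) k * (p(m := u)) k t) = 0"
        unfolding sum_insert by simp
      then have "(c(m := -1)) m = 0" using A unfolding lin_indep_on_def by blast
      then show False by simp
    qed
  next
    assume N: "\<not> in_span K p u"
    show "lin_indep_on (insert m K) (p(m := u))"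
      unfolding lin_indep_on_def
    proof (intro allI impI)
      fix c assume c: "\<forall>t\<in>{-1..1}. (\<Sum>k\<in>insert m K. c k * (p(m := u)) k t) = 0"
      have "c m = 0"
      proof (rule ccontr)
        assume "c m \<noteq> 0"
        have "u t = (\<Sum>k\<in>K. (- c k / c m) * p k t)" if "t \<in> {-1..1}" for t
        proof -
          have "c m * u t + (\<Sum>k\<in>K. c k * p k t) = 0"
            using c[rule_format, OF that] by (simp only: sum_insert)
          then have "u t = (- 1 / c m) * (\<Sum>k\<in>K. c k * p k t)"
            using \<open>c m \<noteq> 0\<close> by (simp add: field_simps)
          then show ?thesis by (simp add: sum_distrib_left)
        qed
        then have "in_span K p u" unfolding in_span_def by (intro exI[of _ "\<lambda>k. - c k / c m"]) blast
        then show False using N by blast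
      qed
      have "\<forall>t\<in>{-1..1}. (\<Sum>k\<in>K. c k * p k t) = 0"
      proof
        fix t :: real assume "t \<in> {-1..1}"
        then have "c m * u t + (\<Sum>k\<in>K. c k * p k t) = 0"
          using c[rule_format] by (simp only: sum_insert)
        then show "(\<Sum>k\<in>K. c k * p k t) = 0" using \<open>c m = 0\<close> by simp
      qed
      then show "\<forall>k\<in>insert m K. c k = 0"
        using indep \<open>c m = 0\<close> unfolding lin_indep_on_def by blast
    qed
  qed
qed

text \<open>Two points of a line through a point \<open>b\<close> outside the span would span \<open>b\<close>.\<close>
lemma finite_lerp_in_span:
  assumes N: "\<not> in_span K p b"
  shows "finite {s. in_span K p (lerp s a b)}"
proof -
  have unique: "s = s'" if s: "in_span K p (lerp s a b)" and s': "in_span K p (lerp s' a b)" for s s'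
  proof (rule ccontr)
    assume "s \<noteq> s'"
    have pt: "((1 - s') / (s - s')) * lerp s a b t + (- (1 - s) / (s - s')) * lerp s' a b t = b t" for t
    proof -
      have "(1 - s') * lerp s a b t - (1 - s) * lerp s' a b t = (s - s') * b t"
        by (simp add: lerp_def algebra_simps)
      then show ?thesis using \<open>s \<noteq> s'\<close> by (simp add: divide_simps) (simp add: algebra_simps)
    qed
    then have "(\<lambda>t. ((1 - s') / (s - s')) * lerp s a b t + (- (1 - s) / (s - s')) * lerp s' a b t) = b"
      by (intro ext pt)
    then show False using in_span_lincomb[OF s s'] N by metis
  qed
  show ?thesis
  proof (cases "\<exists>s0. in_span K p (lerp s0 a b)")
    case True
    then obtain s0 where "in_span K p (lerp s0 a b)" by blast
    then have "{s. in_span K p (lerp s a b)} \<subseteq> {s0}" using unique by blast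
    then show ?thesis by (rule finite_subset) simp
  qed simp
qed

lemma continuous_nonneg_integral_zero:
  fixes v :: "real \<Rightarrow> real"
  assumes v: "continuous_on {-1..1} v" "\<And>t. t \<in> {-1..1} \<Longrightarrow> 0 \<le> v t"
    and int: "integral {-1..1} v = 0" and t: "t \<in> {-1..1}"
  shows "v t = 0"
proof -
  have i: "(v has_integral 0) (cbox (-1) 1)"
    using int integrable_continuous_real[OF v(1)] by (metis cbox_interval has_integral_integral)
  show ?thesis
    by (rule has_integral_0_cbox_imp_0[OF _ _ i]) (use v t in auto)
qed

locale cont_indep_family =
  fixes K :: "'i set" and p :: "'i \<Rightarrow> real \<Rightarrow> real"
  assumes finite_K: "finite K"
    and cont_p: "\<And>k. k \<in> K \<Longrightarrow> continuous_on {-1..1} (p k)"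
    and indep: "lin_indep_on K p"
begin

lemma cont_span_sum: "continuous_on {-1..1} (\<lambda>t. \<Sum>k\<in>K. c k * p k t)"
  by (intro continuous_intros cont_p)

lemma integral_mult_span_sum:
  assumes "continuous_on {-1..1} w"
  shows "integral {-1..1} (\<lambda>t. w t * (\<Sum>k\<in>K. c k * p k t))
    = (\<Sum>k\<in>K. c k * integral {-1..1} (\<lambda>t. w t * p k t))"
proof -
  have "integral {-1..1} (\<lambda>t. w t * (\<Sum>k\<in>K. c k * p k t))
      = (\<Sum>k\<in>K. integral {-1..1} (\<lambda>t. c k * (w t * p k t)))"
    unfolding sum_distrib_left
    by (subst integral_sum[OF finite_K])
      (auto simp: algebra_simps intro!: integrable_continuous_real continuous_intros assms cont_p)
  then show ?thesis by simp
qed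

definition pairing :: "'i \<Rightarrow> (real \<Rightarrow> real) \<Rightarrow> real" where
  "pairing j h = (if j \<in> K then integral {-1..1} (\<lambda>t. h t * p j t) else 0)"

sublocale pairing: functionals_on_subspace "{h. continuous_on {-1..1} h}" pairing
proof
  show "pairing j (\<lambda>t. x t + y t) = pairing j x + pairing j y"
    if "x \<in> {h. continuous_on {-1..1} h}" "y \<in> {h. continuous_on {-1..1} h}" for j x y
  proof (cases "j \<in> K")
    case True
    then have "(\<lambda>t. x t * p j t) integrable_on {-1..1}" "(\<lambda>t. y t * p j t) integrable_on {-1..1}"
      using that cont_p by (auto intro!: integrable_continuous_real continuous_intros)
    then show ?thesis using True by (simp add: pairing_def distrib_right integral_add)
  qed (simp add: pairing_def)
  show "pairing j (\<lambda>t. c * x t) = c * pairing j x" for j c x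
    by (simp add: pairing_def mult.assoc)
qed (auto intro: continuous_intros)

text \<open>A dependency among the pairings would be a span element orthogonal to itself.\<close>
lemma not_pairing_dependent: "\<not> pairing.dependent K"
proof
  assume "pairing.dependent K"
  then obtain c where c: "\<exists>j\<in>K. c j \<noteq> 0"
    "\<forall>x\<in>{h. continuous_on {-1..1} h}. (\<Sum>j\<in>K. c j * pairing j x) = 0"
    unfolding pairing.dependent_def by blast
  define v where "v = (\<lambda>t. \<Sum>k\<in>K. c k * p k t)"
  have "integral {-1..1} (\<lambda>t. v t * v t) = (\<Sum>k\<in>K. c k * integral {-1..1} (\<lambda>t. v t * p k t))"
    unfolding v_def by (rule integral_mult_span_sum[OF cont_span_sum])
  also have "\<dots> = (\<Sum>j\<in>K. c j * pairing j v)"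
    by (intro sum.cong) (auto simp: pairing_def)
  also have "\<dots> = 0" using c(2) cont_span_sum by (simp add: v_def)
  finally have int: "integral {-1..1} (\<lambda>t. v t * v t) = 0" .
  have "continuous_on {-1..1} (\<lambda>t. v t * v t)"
    unfolding v_def by (intro continuous_intros cont_p)
  then have "v t * v t = 0" if "t \<in> {-1..1}" for t
    using continuous_nonneg_integral_zero[OF _ _ int that] by simp
  then have "\<forall>t\<in>{-1..1}. (\<Sum>k\<in>K. c k * p k t) = 0" unfolding v_def by simp
  then show False using indep c(1) unfolding lin_indep_on_def by blast
qed

lemma ex_dual_family:
  "\<exists>w. (\<forall>k. continuous_on {-1..1} (w k))
     \<and> (\<forall>j\<in>K. \<forall>c. integral {-1..1} (\<lambda>t. w j t * (\<Sum>k\<in>K. c k * p k t)) = c j)"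
proof -
  have surj: "pairing.jointly_surj K"
    using pairing.dependent_or_jointly_surj[OF finite_K] not_pairing_dependent by blast
  obtain w where w: "\<And>k. w k \<in> {h. continuous_on {-1..1} h}"
    "\<And>k j. j \<in> K \<Longrightarrow> pairing j (w k) = (if j = k then 1 else 0)"
    using pairing.ex_unit_preimages[OF surj] by metis
  have "integral {-1..1} (\<lambda>t. w j t * (\<Sum>k\<in>K. c k * p k t)) = c j" if j: "j \<in> K" for j c
  proof -
    have "(\<Sum>k\<in>K. c k * integral {-1..1} (\<lambda>t. w j t * p k t)) = (\<Sum>k\<in>K. c k * (if k = j then 1 else 0))"
      using w(2) by (intro sum.cong) (auto simp: pairing_def)
    moreover have "integral {-1..1} (\<lambda>t. w j t * (\<Sum>k\<in>K. c k * p k t))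
        = (\<Sum>k\<in>K. c k * integral {-1..1} (\<lambda>t. w j t * p k t))"
      using w(1)[of j] by (simp add: integral_mult_span_sum)
    ultimately show ?thesis using j finite_K by (simp add: if_distrib cong: if_cong)
  qed
  moreover have "\<forall>k. continuous_on {-1..1} (w k)" using w(1) by simp
  ultimately show ?thesis by blast
qed

definition dual :: "'i \<Rightarrow> real \<Rightarrow> real" where
  "dual = (SOME w. (\<forall>k. continuous_on {-1..1} (w k))
     \<and> (\<forall>j\<in>K. \<forall>c. integral {-1..1} (\<lambda>t. w j t * (\<Sum>k\<in>K. c k * p k t)) = c j))"

lemma cont_dual: "continuous_on {-1..1} (dual k)"
  and integral_dual_span_sum: "j \<in> K \<Longrightarrow> integral {-1..1} (\<lambda>t. dual j t * (\<Sum>k\<in>K. c k * p k t)) = c j"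
  using someI_ex[OF ex_dual_family] unfolding dual_def[symmetric] by blast+

definition coeff :: "'i \<Rightarrow> (real \<Rightarrow> real) \<Rightarrow> real" where
  "coeff k v = integral {-1..1} (\<lambda>t. dual k t * v t)"

definition dual_bound :: "'i \<Rightarrow> real" where
  "dual_bound k = (SUP t\<in>{-1..1}. \<bar>dual k t\<bar>)"

lemma abs_dual_le: "t \<in> {-1..1} \<Longrightarrow> \<bar>dual k t\<bar> \<le> dual_bound k"
  unfolding dual_bound_def
proof (rule cSUP_upper)
  have "compact ((\<lambda>t. \<bar>dual k t\<bar>) ` {-1..1})"
    by (intro compact_continuous_image continuous_intros cont_dual) simp
  then show "bdd_above ((\<lambda>t. \<bar>dual k t\<bar>) ` {-1..1})"
    by (simp add: bounded_imp_bdd_above compact_imp_bounded)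
qed

lemma span_expansion:
  assumes "in_span K p v" "t \<in> {-1..1}"
  shows "v t = (\<Sum>k\<in>K. coeff k v * p k t)"
proof -
  obtain c where c: "\<forall>t\<in>{-1..1}. v t = (\<Sum>k\<in>K. c k * p k t)"
    using assms(1) unfolding in_span_def by blast
  have "coeff k v = c k" if "k \<in> K" for k
  proof -
    have "coeff k v = integral {-1..1} (\<lambda>t. dual k t * (\<Sum>j\<in>K. c j * p j t))"
      unfolding coeff_def using c by (intro integral_cong) simp
    then show ?thesis using integral_dual_span_sum[OF that] by simp
  qed
  then show ?thesis using c assms(2) by simp
qed

lemma abs_coeff_le:
  assumes "continuous_on {-1..1} v"
  shows "\<bar>coeff k v\<bar> \<le> dual_bound k * integral {-1..1} (\<lambda>t. \<bar>v t\<bar>)"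
proof -
  have "norm (coeff k v) \<le> integral {-1..1} (\<lambda>t. dual_bound k * \<bar>v t\<bar>)"
    unfolding coeff_def
    using abs_dual_le assms cont_dual
    by (intro integral_norm_bound_integral)
      (auto simp: abs_mult mult_right_mono intro!: integrable_continuous_real continuous_intros)
  then show ?thesis by simp
qed

lemma coeff_diff:
  assumes "continuous_on {-1..1} u" "continuous_on {-1..1} v"
  shows "coeff k u - coeff k v = coeff k (\<lambda>t. u t - v t)"
  unfolding coeff_def right_diff_distrib using assms cont_dual
  by (intro integral_diff[symmetric] integrable_continuous_real continuous_intros)

definition eval_bound :: "real \<Rightarrow> real" where
  "eval_bound t = (\<Sum>k\<in>K. dual_bound k * \<bar>p k t\<bar>)"

lemma dual_bound_nonneg: "dual_bound k \<ge> 0"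
  using abs_dual_le[of 0 k] abs_ge_zero[of "dual k 0"] by simp

lemma eval_bound_nonneg: "eval_bound t \<ge> 0"
  unfolding eval_bound_def using dual_bound_nonneg by (simp add: sum_nonneg)

lemma abs_sum_coeff_le:
  assumes "continuous_on {-1..1} v"
  shows "\<bar>\<Sum>k\<in>K. coeff k v * p k t\<bar> \<le> eval_bound t * integral {-1..1} (\<lambda>t. \<bar>v t\<bar>)"
proof -
  have "\<bar>\<Sum>k\<in>K. coeff k v * p k t\<bar> \<le> (\<Sum>k\<in>K. dual_bound k * integral {-1..1} (\<lambda>t. \<bar>v t\<bar>) * \<bar>p k t\<bar>)"
    using abs_coeff_le[OF assms]
    by (intro order.trans[OF sum_abs] sum_mono) (simp add: abs_mult mult_right_mono)
  also have "\<dots> = eval_bound t * integral {-1..1} (\<lambda>t. \<bar>v t\<bar>)"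
    unfolding eval_bound_def sum_distrib_right by (simp add: mult_ac)
  finally show ?thesis .
qed

lemma abs_span_le:
  assumes "continuous_on {-1..1} v" "in_span K p v" "t \<in> {-1..1}"
  shows "\<bar>v t\<bar> \<le> eval_bound t * integral {-1..1} (\<lambda>t. \<bar>v t\<bar>)"
  using abs_sum_coeff_le[OF assms(1)] span_expansion[OF assms(2,3)] by simp

text \<open>The span is closed under uniform limits: the coefficients of a span element depend
  continuously on it, so a span element \<open>u'\<close> near \<open>u\<close> is close to the projection
  \<open>\<Sum>k. coeff k u * p k\<close>, which must differ from \<open>u\<close> somewhere.\<close>
lemma not_in_span_open:
  assumes u: "continuous_on {-1..1} u" and N: "\<not> in_span K p u"
  shows "\<exists>e>0. \<forall>u'. continuous_on {-1..1} u' \<longrightarrow> (\<forall>t\<in>{-1..1}. \<bar>u t - u' t\<bar> < e) \<longrightarrow> \<not> in_span K p u'"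
proof -
  have "\<not> (\<forall>t\<in>{-1..1}. u t = (\<Sum>k\<in>K. coeff k u * p k t))"
  proof
    assume "\<forall>t\<in>{-1..1}. u t = (\<Sum>k\<in>K. coeff k u * p k t)"
    then have "in_span K p u" unfolding in_span_def by (intro exI[of _ "\<lambda>k. coeff k u"])
    then show False using N by contradiction
  qed
  then obtain t0 where t0: "t0 \<in> {-1..1}" "u t0 \<noteq> (\<Sum>k\<in>K. coeff k u * p k t0)" by blast
  define d where "d = \<bar>u t0 - (\<Sum>k\<in>K. coeff k u * p k t0)\<bar>"
  define e where "e = d / (1 + 2 * eval_bound t0)"
  have "d > 0" "e > 0" using t0 eval_bound_nonneg[of t0] by (simp_all add: d_def e_def)
  moreover have "\<not> in_span K p u'"
    if u': "continuous_on {-1..1} u'" and close: "\<forall>t\<in>{-1..1}. \<bar>u t - u' t\<bar> < e" for u'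
  proof
    assume "in_span K p u'"
    then have "u' t0 = (\<Sum>k\<in>K. coeff k u' * p k t0)" by (rule span_expansion[OF _ t0(1)])
    moreover have "(\<Sum>k\<in>K. coeff k (\<lambda>t. u t - u' t) * p k t0)
        = (\<Sum>k\<in>K. coeff k u * p k t0) - (\<Sum>k\<in>K. coeff k u' * p k t0)"
      unfolding coeff_diff[OF u u', symmetric] by (simp add: left_diff_distrib sum_subtractf)
    moreover have "integral {-1..1} (\<lambda>t. \<bar>u t - u' t\<bar>) \<le> integral {-1..1} (\<lambda>t::real. e)"
      using close u u'
      by (intro integral_le) (auto intro!: integrable_continuous_real continuous_intros less_imp_le)
    then have "eval_bound t0 * integral {-1..1} (\<lambda>t. \<bar>u t - u' t\<bar>) \<le> eval_bound t0 * (2 * e)"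
      using eval_bound_nonneg[of t0] by (intro mult_left_mono) auto
    moreover have "\<bar>\<Sum>k\<in>K. coeff k (\<lambda>t. u t - u' t) * p k t0\<bar>
        \<le> eval_bound t0 * integral {-1..1} (\<lambda>t. \<bar>u t - u' t\<bar>)"
      using u u' by (intro abs_sum_coeff_le continuous_intros)
    moreover have "\<bar>u t0 - u' t0\<bar> < e" using close t0(1) by blast
    ultimately have "d < e * (1 + 2 * eval_bound t0)" unfolding d_def by (simp add: algebra_simps)
    then show False using \<open>d > 0\<close> eval_bound_nonneg[of t0] by (simp add: e_def)
  qed
  ultimately show ?thesis by blast
qed

end

definition lip_bumps :: "(real \<Rightarrow> real) set" where
  "lip_bumps = {h. (\<exists>M. M-lipschitz_on {-1..1} h) \<and> h (-1) = 0 \<and> h 1 = 0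
                   \<and> (\<forall>t. t \<notin> {-1..1} \<longrightarrow> h t = 0)}"

lemma lip_bumps_cont: "h \<in> lip_bumps \<Longrightarrow> continuous_on {-1..1} h"
  unfolding lip_bumps_def using lipschitz_on_continuous_on by blast

lemma lip_bumpsI:
  assumes "M-lipschitz_on {-1..1} g" "g (-1) = 0" "g 1 = 0"
  shows "(\<lambda>s. if s \<in> {-1..1} then g s else 0) \<in> lip_bumps"
proof -
  have "M-lipschitz_on {-1..1} (\<lambda>s. if s \<in> {-1..1} then g s else 0)"
    using assms(1) by (rule lipschitz_on_transform) simp
  then show ?thesis using assms(2,3) unfolding lip_bumps_def by auto
qed

lemma strict_mono_on_add_lipschitz:
  assumes h: "M-lipschitz_on S h" and d: "0 \<le> d" "d * M < 1"
  shows "strict_mono_on S (\<lambda>t. t + d * h t)"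
proof (rule strict_mono_onI)
  fix s t :: real assume st: "s \<in> S" "t \<in> S" "s < t"
  have "\<bar>h t - h s\<bar> \<le> M * (t - s)"
    using lipschitz_onD[OF h st(2,1)] st(3) by (simp add: dist_real_def)
  then have "d * \<bar>h t - h s\<bar> \<le> (d * M) * (t - s)" using d(1) by (simp add: mult_left_mono mult.assoc)
  also have "\<dots> < t - s" using d(2) st(3) by simp
  finally have "d * \<bar>h t - h s\<bar> < t - s" .
  moreover have "d * (h s - h t) \<le> d * \<bar>h t - h s\<bar>" using d(1) by (intro mult_left_mono) auto
  ultimately show "s + d * h s < t + d * h t" by (simp add: algebra_simps)
qed

lemma perturb_id_G0:
  assumes h: "h \<in> lip_bumps" and int: "integral {-1..1} h = 0"
  shows "\<exists>d>0. (\<lambda>t. t + d * h t) \<in> G0"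
proof -
  obtain M where M: "M-lipschitz_on {-1..1} h" using h unfolding lip_bumps_def by blast
  define d where "d = 1 / (M + 1)"
  have "M \<ge> 0" using lipschitz_on_nonneg[OF M] .
  then have d: "d > 0" "d * M < 1" by (simp_all add: d_def)
  let ?b = "\<lambda>t. t + d * h t"
  have cont: "continuous_on {-1..1} ?b" using lip_bumps_cont[OF h] by (intro continuous_intros)
  have mono: "strict_mono_on {-1..1} ?b"
    using strict_mono_on_add_lipschitz[OF M _ d(2)] d(1) by simp
  have ends: "?b (-1) = -1" "?b 1 = 1" "\<forall>t. t \<notin> {-1..1} \<longrightarrow> ?b t = t"
    using h unfolding lip_bumps_def by auto
  then have "inc_homeo ?b" using cont mono by (simp add: inc_homeo_def)
  moreover have "integral {-1..1} ?b = 0"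
    using int integral_id_sym lip_bumps_cont[OF h]
    by (subst integral_add) (auto intro!: integrable_continuous_real continuous_intros)
  ultimately have "?b \<in> G0"
    using cont mono ends inc_homeo_maps[of ?b] by (auto simp: G0_def Gset_def)
  then show ?thesis using d(1) by blast
qed

lemma functionals_Q_lip_bumps:
  assumes "\<And>j. inc_homeo (P j)"
  shows "functionals_on_subspace lip_bumps (\<lambda>j h. Q h (P j))"
proof
  show "(\<lambda>t. 0) \<in> lip_bumps" unfolding lip_bumps_def by (auto intro: lipschitz_intros)
  show "(\<lambda>t. x t + y t) \<in> lip_bumps" if "x \<in> lip_bumps" "y \<in> lip_bumps" for x y
    using that unfolding lip_bumps_def by (auto intro: lipschitz_on_add)
  show "(\<lambda>t. c * x t) \<in> lip_bumps" if "x \<in> lip_bumps" for c x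
    using that unfolding lip_bumps_def by (auto intro: lipschitz_on_cmult_real)
  show "Q (\<lambda>t. x t + y t) (P j) = Q x (P j) + Q y (P j)" if "x \<in> lip_bumps" "y \<in> lip_bumps" for j x y
    using Q_lincomb[OF lip_bumps_cont lip_bumps_cont assms, of x y 1 1] that by simp
  show "Q (\<lambda>t. c * x t) (P j) = c * Q x (P j)" for j c x
    by (simp add: Q_def)
qed

lemma integral_comp_hinv_step_bounds:
  assumes p: "inc_homeo p" and ab: "-1 \<le> a" "a \<le> b" "b \<le> 1"
    and r: "continuous_on {-1..1} r" "\<And>s. s \<in> {-1..1} \<Longrightarrow> 0 \<le> r s \<and> r s \<le> 1"
    and r0: "\<And>s. s \<in> {-1..a} \<Longrightarrow> r s = 0" and r1: "\<And>s. s \<in> {b..1} \<Longrightarrow> r s = 1"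
  shows "1 - p b \<le> integral {-1..1} (\<lambda>t. r (hinv p t))" "integral {-1..1} (\<lambda>t. r (hinv p t)) \<le> 1 - p a"
proof -
  let ?g = "\<lambda>t. r (hinv p t)"
  have int: "?g integrable_on {x..y}" if "-1 \<le> x" "y \<le> 1" for x y
    using that by (intro integrable_continuous_real continuous_on_subset[OF cont_comp_hinv[OF p r(1)]]) auto
  have pab: "-1 \<le> p a" "p a \<le> p b" "p b \<le> 1"
    using ab inc_homeo_maps[OF p, of a] inc_homeo_maps[OF p, of b] inc_homeo_le_iff[OF p, of a b] by auto
  have hinv_le: "hinv p t \<le> c \<longleftrightarrow> t \<le> p c" if "t \<in> {-1..1}" "c \<in> {-1..1}" for t c
    using inc_homeo_le_iff[OF p hinv_maps[OF p that(1)] that(2)] hinv_right[OF p that(1)] by simp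
  have I1: "integral {-1..p a} ?g = 0"
  proof -
    have "?g t = 0" if "t \<in> {-1..p a}" for t
      using that pab hinv_le[of t a] hinv_maps[OF p, of t] ab by (intro r0) auto
    then have "integral {-1..p a} ?g = integral {-1..p a} (\<lambda>_. 0::real)" by (rule integral_cong)
    then show ?thesis by simp
  qed
  have I3: "integral {p b..1} ?g = 1 - p b"
  proof -
    have "?g t = 1" if "t \<in> {p b..1}" for t
    proof (rule r1)
      have "\<not> hinv p t < b"
        using that pab hinv_le[of t b] hinv_maps[OF p, of t] ab inc_homeo_less_iff[OF p, of "hinv p t" b]
          hinv_right[OF p, of t] by auto
      then show "hinv p t \<in> {b..1}" using hinv_maps[OF p, of t] that pab by auto
    qed
    then have "integral {p b..1} ?g = integral {p b..1} (\<lambda>_. 1::real)" by (rule integral_cong)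
    then show ?thesis using pab by simp
  qed
  have I2: "0 \<le> integral {p a..p b} ?g" "integral {p a..p b} ?g \<le> p b - p a"
  proof -
    have g01: "0 \<le> ?g t" "?g t \<le> 1" if "t \<in> {p a..p b}" for t
      using that pab r(2)[OF hinv_maps[OF p]] by auto
    show "0 \<le> integral {p a..p b} ?g"
      using int pab g01(1) by (intro integral_nonneg) auto
    have "integral {p a..p b} ?g \<le> integral {p a..p b} (\<lambda>_. 1)"
      using int pab g01(2) by (intro integral_le) auto
    then show "integral {p a..p b} ?g \<le> p b - p a" using pab by simp
  qed
  have "integral {-1..p a} ?g + integral {p a..1} ?g = integral {-1..1} ?g"
    "integral {p a..p b} ?g + integral {p b..1} ?g = integral {p a..1} ?g"
    using pab int by (intro Henstock_Kurzweil_Integration.integral_combine; simp)+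
  then show "1 - p b \<le> integral {-1..1} ?g" "integral {-1..1} ?g \<le> 1 - p a"
    using I1 I2 I3 by linarith+
qed

definition ramp :: "real \<Rightarrow> real \<Rightarrow> real \<Rightarrow> real" where
  "ramp a w s = max 0 (min 1 ((s - a) / w))"

lemma ramp_lipschitz:
  assumes "w > 0"
  shows "(1 / w)-lipschitz_on S (ramp a w)"
proof (rule lipschitz_onI)
  fix x y
  have "\<bar>ramp a w x - ramp a w y\<bar> \<le> \<bar>(x - a) / w - (y - a) / w\<bar>"
    unfolding ramp_def by (simp add: max_def min_def)
  also have "\<dots> = \<bar>x - y\<bar> / w" using assms by (simp add: diff_divide_distrib[symmetric])
  finally show "dist (ramp a w x) (ramp a w y) \<le> 1 / w * dist x y" by (simp add: dist_real_def)
qed (use assms in simp)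

definition ramp_bump :: "real \<Rightarrow> real \<Rightarrow> real \<Rightarrow> real" where
  "ramp_bump a w = (\<lambda>s. if s \<in> {-1..1} then ramp a w s - (s + 1) / 2 else 0)"

lemma ramp_bump_lip_bumps:
  assumes "-1 \<le> a" "0 < w" "a + w \<le> 1"
  shows "ramp_bump a w \<in> lip_bumps"
proof -
  have "(1 / w + \<bar>1 / 2\<bar> * (1 + 0))-lipschitz_on {-1..1} (\<lambda>s. ramp a w s - 1 / 2 * (s + 1))"
    by (intro lipschitz_on_diff ramp_lipschitz lipschitz_on_cmult_real lipschitz_on_add
        lipschitz_on_id lipschitz_on_constant assms(2))
  then have "(1 / w + 1 / 2)-lipschitz_on {-1..1} (\<lambda>s. ramp a w s - (s + 1) / 2)" by simp
  then show ?thesis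
    unfolding ramp_bump_def using assms by (intro lip_bumpsI) (auto simp: ramp_def divide_nonpos_pos)
qed

lemma Q_ramp_bump_bounds:
  assumes P: "P \<in> G0" and aw: "-1 \<le> a" "0 < w" "a + w \<le> 1"
  shows "- P (a + w) \<le> Q (ramp_bump a w) P" "Q (ramp_bump a w) P \<le> - P a"
proof -
  have p: "inc_homeo P" by (rule G0_inc_homeo[OF P])
  have r: "continuous_on {-1..1} (ramp a w)" using lipschitz_on_continuous_on[OF ramp_lipschitz] aw(2) .
  have hp: "continuous_on {-1..1} (hinv P)" by (rule inc_homeo_cont[OF inc_homeo_hinv[OF p]])
  have "Q (ramp_bump a w) P = integral {-1..1} (\<lambda>t. ramp a w (hinv P t) - (hinv P t + 1) / 2)"
    unfolding Q_def ramp_bump_def using hinv_maps[OF p] by (intro integral_cong) auto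
  also have "\<dots> = integral {-1..1} (\<lambda>t. ramp a w (hinv P t)) - integral {-1..1} (\<lambda>t. (hinv P t + 1) / 2)"
    using integrable_comp_hinv[OF p r] hp
    by (intro integral_diff) (auto intro!: integrable_continuous_real continuous_intros)
  also have "integral {-1..1} (\<lambda>t. (hinv P t + 1) / 2) = (integral {-1..1} (hinv P) + 2) / 2"
    using hp unfolding Henstock_Kurzweil_Integration.integral_divide
    by (subst integral_add) (auto intro: integrable_continuous_real)
  finally have "Q (ramp_bump a w) P = integral {-1..1} (\<lambda>t. ramp a w (hinv P t)) - 1"
    using G0_integral_hinv[OF P] by simp
  moreover note integral_comp_hinv_step_bounds[OF p _ _ _ r, of a "a + w"]
  ultimately show "- P (a + w) \<le> Q (ramp_bump a w) P" "Q (ramp_bump a w) P \<le> - P a"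
    using aw by (auto simp: ramp_def divide_nonpos_pos)
qed

lemma abs_lincomb_le_ramp_increments:
  assumes K: "finite K" and P: "\<And>j. j \<in> K \<Longrightarrow> P j \<in> G0"
    and c: "\<forall>h\<in>lip_bumps. (\<Sum>j\<in>K. c j * Q h (P j)) = 0"
    and aw: "-1 \<le> a" "0 < w" "a + w \<le> 1"
  shows "\<bar>\<Sum>j\<in>K. c j * P j a\<bar> \<le> (\<Sum>j\<in>K. \<bar>c j\<bar> * (P j (a + w) - P j a))"
proof -
  let ?q = "\<lambda>j. Q (ramp_bump a w) (P j)"
  have "(\<Sum>j\<in>K. c j * ?q j) = 0" using c ramp_bump_lip_bumps[OF aw] by blast
  then have "(\<Sum>j\<in>K. c j * P j a) = (\<Sum>j\<in>K. c j * (P j a + ?q j))"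
    by (simp add: distrib_left sum.distrib)
  also have "\<bar>\<dots>\<bar> \<le> (\<Sum>j\<in>K. \<bar>c j\<bar> * (P j (a + w) - P j a))"
  proof (rule order.trans[OF sum_abs sum_mono])
    fix j assume "j \<in> K"
    moreover have "P j a \<le> P j (a + w)"
      using aw inc_homeo_le_iff[OF G0_inc_homeo[OF P], of j a "a + w"] \<open>j \<in> K\<close> by simp
    ultimately have "\<bar>P j a + ?q j\<bar> \<le> P j (a + w) - P j a"
      using Q_ramp_bump_bounds[OF P[OF \<open>j \<in> K\<close>] aw] by (simp add: abs_le_iff)
    then show "\<bar>c j * (P j a + ?q j)\<bar> \<le> \<bar>c j\<bar> * (P j (a + w) - P j a)"
      by (simp add: abs_mult mult_left_mono)
  qed
  finally show ?thesis .
qed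

text \<open>Testing against ramps of vanishing width recovers the values \<open>P j a\<close>, so
  a dependency among the functionals \<open>h \<mapsto> Q h (P j)\<close> is one among the \<open>P j\<close>.\<close>
lemma Q_functionals_indep:
  assumes K: "finite K" and P: "\<And>j. j \<in> K \<Longrightarrow> P j \<in> G0" and indep: "lin_indep_on K P"
    and c: "\<forall>h\<in>lip_bumps. (\<Sum>j\<in>K. c j * Q h (P j)) = 0"
  shows "\<forall>j\<in>K. c j = 0"
proof -
  define S where "S = (\<lambda>a. \<Sum>j\<in>K. c j * P j a)"
  have cont: "continuous_on {-1..1} (P j)" if "j \<in> K" for j using G0_cont[OF P[OF that]] .
  have "S a = 0" if a: "a \<in> {-1<..<1}" for a
  proof -
    define B where "B = (\<lambda>w. \<Sum>j\<in>K. \<bar>c j\<bar> * (P j (a + w) - P j a))"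
    have "((\<lambda>w. P j (a + w)) \<longlongrightarrow> P j (a + 0)) (at_right 0)" if "j \<in> K" for j
      using continuous_on_interior[OF cont[OF that]] a
      by (intro isCont_tendsto_compose[of _ "P j"] tendsto_intros) auto
    then have "(B \<longlongrightarrow> (\<Sum>j\<in>K. \<bar>c j\<bar> * (P j (a + 0) - P j a))) (at_right 0)"
      unfolding B_def by (intro tendsto_intros)
    then have "(B \<longlongrightarrow> 0) (at_right 0)" by simp
    moreover have "\<forall>\<^sub>F w in at_right 0. \<bar>S a\<bar> \<le> B w"
    proof (rule eventually_mono)
      show "\<forall>\<^sub>F w in at_right 0. w \<in> {0<..<1 - a}"
        using a by (intro eventually_at_right_real) auto
      show "\<bar>S a\<bar> \<le> B w" if "w \<in> {0<..<1 - a}" for w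
        unfolding S_def B_def using a that by (intro abs_lincomb_le_ramp_increments[OF K P c]) auto
    qed
    ultimately have "\<bar>S a\<bar> \<le> 0"
      using tendsto_le[OF trivial_limit_at_right_real _ tendsto_const] by blast
    then show ?thesis by simp
  qed
  moreover have "continuous_on {-1..1} S"
    unfolding S_def by (intro continuous_intros cont)
  ultimately have "S a = 0" if "a \<in> {-1..1}" for a
    using continuous_constant_on_closure[of "{-1<..<1}" S 0 a] that by simp
  then show ?thesis using indep unfolding lin_indep_on_def S_def by auto
qed

text \<open>The family \<open>t, f 1, \<dots>, f n\<close> whose independence defines \<open>GEN n\<close>: index \<open>0\<close>, like
  every index outside \<open>{1..n}\<close>, carries the identity.\<close>
definition id_family :: "nat \<Rightarrow> (nat \<Rightarrow> real \<Rightarrow> real) \<Rightarrow> nat \<Rightarrow> real \<Rightarrow> real" where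
  "id_family n f k = (if k \<in> {1..n} then f k else (\<lambda>t. t))"

lemma id_family_G0: "\<forall>k\<in>{1..n}. f k \<in> G0 \<Longrightarrow> id_family n f j \<in> G0"
  by (simp add: id_family_def id_G0)

lemma sum_id_family:
  "(\<Sum>k\<in>{0..n}. c k * id_family n f k t) = c 0 * t + (\<Sum>k=1..n. c k * f k t)"
proof -
  have "(\<Sum>k\<in>{Suc 0..n}. c k * id_family n f k t) = (\<Sum>k=1..n. c k * f k t)"
    by (intro sum.cong) (auto simp: id_family_def)
  then show ?thesis by (simp add: sum.atLeast_Suc_atMost id_family_def)
qed

lemma GEN_iff:
  "f \<in> GEN n \<longleftrightarrow> (\<forall>k\<in>{1..n}. f k \<in> G0) \<and> lin_indep_on {0..n} (id_family n f)
     \<and> (\<forall>i\<in>{1..n}. \<forall>j\<in>{1..n}. i \<noteq> j \<longrightarrow> Q (f i) (f j) \<noteq> 0)"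
proof -
  have "(\<forall>c0 c. (\<forall>t\<in>{-1..1}. c0 * t + (\<Sum>k=1..n. c k * f k t) = 0) \<longrightarrow> c0 = 0 \<and> (\<forall>k\<in>{1..n}. c k = 0))
    \<longleftrightarrow> lin_indep_on {0..n} (id_family n f)"
    unfolding lin_indep_on_def sum_id_family
  proof (intro iffI allI impI)
    fix c :: "nat \<Rightarrow> real"
    assume gen: "\<forall>c0 c. (\<forall>t\<in>{-1..1}. c0 * t + (\<Sum>k=1..n. c k * f k t) = 0) \<longrightarrow> c0 = 0 \<and> (\<forall>k\<in>{1..n}. c k = 0)"
      and "\<forall>t\<in>{-1..1}. c 0 * t + (\<Sum>k=1..n. c k * f k t) = 0"
    then have "c 0 = 0 \<and> (\<forall>k\<in>{1..n}. c k = 0)" by blast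
    then show "\<forall>k\<in>{0..n}. c k = 0" by (metis atLeastAtMost_iff le_0_eq not_less_eq_eq One_nat_def)
  next
    fix c0 :: real and c :: "nat \<Rightarrow> real"
    assume indep: "\<forall>c. (\<forall>t\<in>{-1..1}. c 0 * t + (\<Sum>k=1..n. c k * f k t) = 0) \<longrightarrow> (\<forall>k\<in>{0..n}. c k = 0)"
      and "\<forall>t\<in>{-1..1}. c0 * t + (\<Sum>k=1..n. c k * f k t) = 0"
    moreover have "(\<Sum>k=1..n. (c(0 := c0)) k * f k t) = (\<Sum>k=1..n. c k * f k t)" for t
      by (intro sum.cong) auto
    ultimately have "\<forall>t\<in>{-1..1}. (c(0 := c0)) 0 * t + (\<Sum>k=1..n. (c(0 := c0)) k * f k t) = 0"
      by simp
    then have "\<forall>k\<in>{0..n}. (c(0 := c0)) k = 0" using indep by blast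
    then show "c0 = 0 \<and> (\<forall>k\<in>{1..n}. c k = 0)" by force
  qed
  then show ?thesis unfolding GEN_def by blast
qed

lemma GENp_iff:
  "f \<in> GENp n \<longleftrightarrow> (\<forall>k\<in>{1..n}. f k \<in> G0) \<and> lin_indep_on {1..n} (\<lambda>k. even_part (f k))
     \<and> (\<forall>i\<in>{1..n}. \<forall>j\<in>{1..n}. i \<noteq> j \<longrightarrow> Q (f i) (f j) \<noteq> 0)"
  unfolding GENp_def lin_indep_on_def by simp

lemma Q_id: "Q h (\<lambda>t. t) = integral {-1..1} h"
  unfolding Q_def by (intro integral_cong) (simp add: hinv_left[OF inc_homeo_id])

text \<open>The first-order perturbation \<open>t + d h\<close> of the identity has \<open>Q (t + d h) (f i) = d Q h (f i)\<close>,
  and the functionals \<open>h \<mapsto> Q h (f i)\<close>, together with \<open>h \<mapsto> \<integral>h\<close>, are jointly surjective.\<close>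
lemma ex_G0_prescribed_Q:
  assumes G: "\<forall>k\<in>{1..n}. f k \<in> G0" and indep: "lin_indep_on {0..n} (id_family n f)"
  shows "\<exists>b\<in>G0. \<exists>d>0. \<forall>i\<in>{1..n}. Q b (f i) = d * y i"
proof -
  let ?P = "id_family n f"
  interpret functionals_on_subspace lip_bumps "\<lambda>j h. Q h (?P j)"
    using functionals_Q_lip_bumps G0_inc_homeo[OF id_family_G0[OF G]] by blast
  have "\<not> dependent {0..n}"
    using Q_functionals_indep[OF _ id_family_G0[OF G] indep] unfolding dependent_def by blast
  then have "jointly_surj {0..n}" using dependent_or_jointly_surj[of "{0..n}"] by blast
  then obtain h where h: "h \<in> lip_bumps" "\<forall>j\<in>{0..n}. Q h (?P j) = (if j = 0 then 0 else y j)"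
    unfolding jointly_surj_def by (elim allE[of _ "\<lambda>j. if j = 0 then 0 else y j"]) blast
  then have "integral {-1..1} h = 0" using h(2)[rule_format, of 0] by (simp add: id_family_def Q_id)
  then obtain d where d: "d > 0" "(\<lambda>t. t + d * h t) \<in> G0" using perturb_id_G0[OF h(1)] by blast
  have "Q (\<lambda>t. t + d * h t) (f i) = d * y i" if i: "i \<in> {1..n}" for i
  proof -
    have "Q (\<lambda>t. 1 * t + d * h t) (f i) = 1 * Q (\<lambda>t. t) (f i) + d * Q h (f i)"
      using i G by (intro Q_lincomb continuous_intros lip_bumps_cont[OF h(1)] G0_inc_homeo) auto
    moreover have "Q h (f i) = y i" using h(2)[rule_format, of i] i by (simp add: id_family_def)
    moreover have "Q (\<lambda>t. t) (f i) = 0" using G0_integral_hinv[of "f i"] G i by (simp add: Q_def)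
    ultimately show ?thesis by simp
  qed
  then show ?thesis using d by blast
qed

definition tent :: "real \<Rightarrow> real \<Rightarrow> real \<Rightarrow> real" where
  "tent c k s = max 0 (1 - \<bar>s - c\<bar> * k)"

lemma tent_lipschitz:
  assumes "k \<ge> 0"
  shows "k-lipschitz_on S (tent c k)"
proof (rule lipschitz_onI)
  fix x y
  have "\<bar>tent c k x - tent c k y\<bar> \<le> \<bar>k * (\<bar>y - c\<bar> - \<bar>x - c\<bar>)\<bar>"
    unfolding tent_def by (simp add: max_def algebra_simps)
  also have "\<dots> \<le> k * \<bar>x - y\<bar>"
    using assms by (simp add: abs_mult mult_left_mono abs_triangle_ineq3[of "y - c" "x - c", simplified])
  finally show "dist (tent c k x) (tent c k y) \<le> k * dist x y" by (simp add: dist_real_def)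
qed (use assms in simp)

lemma tent_cont: "continuous_on S (tent c k)"
  unfolding tent_def by (intro continuous_intros)

lemma tent_bounds: "0 \<le> tent c k s" "k \<ge> 0 \<Longrightarrow> tent c k s \<le> 1"
  unfolding tent_def by auto

lemma integral_tent_le:
  assumes e: "0 < e" "-1 \<le> c - e" "c + e \<le> 1"
  shows "integral {-1..1} (tent c (1 / e)) \<le> 2 * e"
proof -
  let ?g = "tent c (1 / e)"
  have int: "?g integrable_on {x..y}" for x y by (rule integrable_continuous_real[OF tent_cont])
  have zero: "integral {x..y} ?g = 0" if "{x..y} \<inter> {c - e<..<c + e} = {}" for x y
  proof -
    have "?g s = 0" if "s \<in> {x..y}" for s
    proof -
      have "e \<le> \<bar>s - c\<bar>" using that \<open>{x..y} \<inter> _ = {}\<close> by (auto simp: abs_if)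
      then have "1 \<le> \<bar>s - c\<bar> * (1 / e)" using e(1) by (simp add: field_simps)
      then show ?thesis by (simp add: tent_def)
    qed
    then have "integral {x..y} ?g = integral {x..y} (\<lambda>_. 0::real)" by (rule integral_cong)
    then show ?thesis by simp
  qed
  have "integral {c - e..c + e} ?g \<le> integral {c - e..c + e} (\<lambda>_. 1::real)"
    using int tent_bounds e(1) by (intro integral_le) auto
  moreover have "integral {-1..c - e} ?g + integral {c - e..1} ?g = integral {-1..1} ?g"
    "integral {c - e..c + e} ?g + integral {c + e..1} ?g = integral {c - e..1} ?g"
    using e int by (intro Henstock_Kurzweil_Integration.integral_combine; simp)+
  moreover have "integral {-1..c - e} ?g = 0" "integral {c + e..1} ?g = 0"
    by (intro zero; auto)+
  ultimately show ?thesis using e(1) by simp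
qed

lemma integral_tent_pos: "integral {-1..1} (tent 0 4) > 0"
proof -
  have "integral {-1..1} (tent 0 4) \<ge> 0"
    by (intro integral_nonneg integrable_continuous_real tent_cont) (simp add: tent_bounds)
  moreover have "integral {-1..1} (tent 0 4) \<noteq> 0"
    using continuous_nonneg_integral_zero[OF tent_cont, of 0 4 0] by (auto simp: tent_bounds tent_def)
  ultimately show ?thesis by simp
qed

text \<open>A tall narrow tent at \<open>-1/2\<close>, compensated by a multiple of a fixed tent at \<open>0\<close>
  so that the integral vanishes.\<close>
lemma ex_narrow_bump:
  assumes e: "0 < e" "e \<le> 1/8"
  shows "\<exists>h\<in>lip_bumps. integral {-1..1} h = 0 \<and> h (-1/2) = 1 \<and> h (1/2) = 0
           \<and> integral {-1..1} (\<lambda>t. \<bar>h t\<bar>) \<le> 4 * e"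
proof -
  define T1 where "T1 = tent (-1/2) (1 / e)"
  define T2 where "T2 = tent 0 4"
  define lam where "lam = integral {-1..1} T1 / integral {-1..1} T2"
  define h where "h = (\<lambda>s. if s \<in> {-1..1} then T1 s - lam * T2 s else 0)"
  have int: "T1 integrable_on {-1..1}" "T2 integrable_on {-1..1}"
    unfolding T1_def T2_def by (simp_all add: integrable_continuous_real tent_cont)
  have I1: "integral {-1..1} T1 \<le> 2 * e" unfolding T1_def using e by (intro integral_tent_le) auto
  have I2: "integral {-1..1} T2 > 0" unfolding T2_def by (rule integral_tent_pos)
  have lam: "lam \<ge> 0"
    unfolding lam_def T1_def using I2 int by (simp add: integral_nonneg tent_bounds T1_def)
  have "1 / e \<ge> 8" using e by (simp add: field_simps)
  then have vals: "T1 (-1) = 0" "T1 1 = 0" "T1 (-1/2) = 1" "T1 (1/2) = 0"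
    "T2 (-1) = 0" "T2 1 = 0" "T2 (-1/2) = 0" "T2 (1/2) = 0"
    by (auto simp: T1_def T2_def tent_def)
  have "(1 / e + \<bar>lam\<bar> * 4)-lipschitz_on {-1..1} (\<lambda>s. T1 s - lam * T2 s)"
    unfolding T1_def T2_def using e by (intro lipschitz_intros tent_lipschitz) auto
  then have bump: "h \<in> lip_bumps" unfolding h_def using vals by (intro lip_bumpsI) auto
  have "integral {-1..1} h = integral {-1..1} (\<lambda>s. T1 s - lam * T2 s)"
    unfolding h_def by (intro integral_cong) simp
  also have "\<dots> = integral {-1..1} T1 - lam * integral {-1..1} T2"
    using int by (subst integral_diff) (auto intro: integrable_on_mult_right)
  also have "\<dots> = 0" using I2 by (simp add: lam_def)
  finally have mean: "integral {-1..1} h = 0" .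
  have "integral {-1..1} (\<lambda>t. \<bar>h t\<bar>) \<le> integral {-1..1} (\<lambda>s. T1 s + lam * T2 s)"
    using int lam lip_bumps_cont[OF bump]
    by (intro integral_le) (auto simp: h_def T1_def T2_def tent_bounds abs_le_iff
        intro!: integrable_continuous_real continuous_intros tent_cont)
  also have "\<dots> = integral {-1..1} T1 + lam * integral {-1..1} T2"
    using int by (subst integral_add) (auto intro: integrable_on_mult_right)
  also have "\<dots> = 2 * integral {-1..1} T1" using I2 by (simp add: lam_def)
  finally have "integral {-1..1} (\<lambda>t. \<bar>h t\<bar>) \<le> 4 * e" using I1 by simp
  then show ?thesis using bump mean vals by (auto simp: h_def)
qed

lemma integral_abs_even_part_le:
  assumes h: "continuous_on {-1..1} h"
  shows "integral {-1..1} (\<lambda>t. \<bar>even_part h t\<bar>) \<le> integral {-1..1} (\<lambda>t. \<bar>h t\<bar>)"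
proof -
  have hr: "continuous_on {-1..1} (\<lambda>t. h (- t))"
    by (rule continuous_on_compose2[OF h]) (auto intro: continuous_intros)
  have "integral {-1..1} (\<lambda>t. \<bar>even_part h t\<bar>) \<le> integral {-1..1} (\<lambda>t. (\<bar>h t\<bar> + \<bar>h (- t)\<bar>) / 2)"
    by (intro integral_le integrable_continuous_real continuous_intros even_part_cont h hr)
      (auto simp: even_part_def)
  also have "\<dots> = (integral {-1..1} (\<lambda>t. \<bar>h t\<bar>) + integral {-1..1} (\<lambda>t. \<bar>h (- t)\<bar>)) / 2"
    unfolding Henstock_Kurzweil_Integration.integral_divide
    by (subst integral_add) (auto intro!: integrable_continuous_real continuous_intros h hr)
  also have "integral {-1..1} (\<lambda>t. \<bar>h (- t)\<bar>) = integral {-1..1} (\<lambda>t. \<bar>h t\<bar>)"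
    using Henstock_Kurzweil_Integration.integral_reflect_real[of 1 "-1" "\<lambda>t. \<bar>h t\<bar>"] by simp
  finally show ?thesis by simp
qed

context cont_indep_family
begin

text \<open>Span elements are controlled pointwise by their \<open>L\<^sup>1\<close>-norm, while the narrow bump
  at \<open>-1/2\<close> (and its even part) has value of order \<open>1\<close> there but small \<open>L\<^sup>1\<close>-norm.\<close>
lemma ex_bump_not_in_span:
  "\<exists>h\<in>lip_bumps. integral {-1..1} h = 0 \<and> \<not> in_span K p h \<and> \<not> in_span K p (even_part h)"
proof -
  define C where "C = eval_bound (-1/2)"
  have C: "C \<ge> 0" unfolding C_def by (rule eval_bound_nonneg)
  define e where "e = min (1/8) (1 / (16 * (C + 1)))"
  have e: "0 < e" "e \<le> 1/8" "e \<le> 1 / (16 * (C + 1))" unfolding e_def using C by auto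
  obtain h where h: "h \<in> lip_bumps" "integral {-1..1} h = 0" "h (-1/2) = 1" "h (1/2) = 0"
    and small: "integral {-1..1} (\<lambda>t. \<bar>h t\<bar>) \<le> 4 * e"
    using ex_narrow_bump[OF e(1,2)] by blast
  have hc: "continuous_on {-1..1} h" by (rule lip_bumps_cont[OF h(1)])
  have "C * integral {-1..1} (\<lambda>t. \<bar>h t\<bar>) \<le> C * (4 * (1 / (16 * (C + 1))))"
    using small e(3) C by (intro mult_left_mono) auto
  also have "\<dots> < 1/2" using C by (simp add: field_simps)
  finally have Ch: "C * integral {-1..1} (\<lambda>t. \<bar>h t\<bar>) < 1/2" .
  have "\<not> in_span K p h"
    using abs_span_le[OF hc, of "-1/2"] Ch h(3) by (auto simp: C_def)
  moreover have "\<not> in_span K p (even_part h)"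
  proof
    assume "in_span K p (even_part h)"
    then have "\<bar>even_part h (-1/2)\<bar> \<le> C * integral {-1..1} (\<lambda>t. \<bar>even_part h t\<bar>)"
      using abs_span_le[OF even_part_cont[OF hc]] by (simp add: C_def)
    also have "\<dots> \<le> C * integral {-1..1} (\<lambda>t. \<bar>h t\<bar>)"
      using integral_abs_even_part_le[OF hc] C by (rule mult_left_mono)
    finally show False using Ch h(3,4) by (simp add: even_part_def)
  qed
  ultimately show ?thesis using h(1,2) by blast
qed

lemma ex_G0_not_in_span:
  assumes "in_span K p (\<lambda>t. t)"
  shows "\<exists>b\<in>G0. \<not> in_span K p b"
proof -
  obtain h d where h: "h \<in> lip_bumps" "\<not> in_span K p h" and d: "d > 0" "(\<lambda>t. t + d * h t) \<in> G0"
    using ex_bump_not_in_span perturb_id_G0 by metis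
  have "\<not> in_span K p (\<lambda>t. t + d * h t)"
  proof
    assume "in_span K p (\<lambda>t. t + d * h t)"
    from in_span_lincomb[OF this assms, of "1 / d" "- 1 / d"]
    have "in_span K p (\<lambda>t. 1 / d * (t + d * h t) + - 1 / d * t)" .
    also have "(\<lambda>t. 1 / d * (t + d * h t) + - 1 / d * t) = h" using d(1) by (auto simp: field_simps)
    finally show False using h(2) by contradiction
  qed
  then show ?thesis using d(2) by blast
qed

lemma ex_G0_even_part_not_in_span: "\<exists>b\<in>G0. \<not> in_span K p (even_part b)"
proof -
  obtain h d where h: "h \<in> lip_bumps" "\<not> in_span K p (even_part h)" and d: "d > 0" "(\<lambda>t. t + d * h t) \<in> G0"
    using ex_bump_not_in_span perturb_id_G0 by metis
  have "\<not> in_span K p (even_part (\<lambda>t. t + d * h t))"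
  proof
    assume "in_span K p (even_part (\<lambda>t. t + d * h t))"
    from in_span_lincomb[OF this this, of "1 / d" 0]
    have "in_span K p (\<lambda>t. 1 / d * even_part (\<lambda>t. t + d * h t) t + 0 * even_part (\<lambda>t. t + d * h t) t)" .
    also have "(\<lambda>t. 1 / d * even_part (\<lambda>t. t + d * h t) t + 0 * even_part (\<lambda>t. t + d * h t) t) = even_part h"
      using d(1) by (auto simp: even_part_def field_simps)
    finally show False using h(2) by contradiction
  qed
  then show ?thesis using d(2) by blast
qed

end

lemma ex_lerp_near:
  assumes a: "a \<in> G0" and b: "b \<in> G0" and B: "finite B" and e: "e > 0"
  shows "\<exists>s. 0 < s \<and> s < 1 \<and> s \<notin> B \<and> lerp s a b \<in> G0 \<and> supdist a (lerp s a b) < e"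
proof -
  have "infinite ({0<..<min 1 (e / 2)} - B)" using Diff_infinite_finite[OF B] e by simp
  then obtain s where s: "0 < s" "s < min 1 (e / 2)" "s \<notin> B"
    by (metis Diff_iff finite.emptyI greaterThanLessThan_iff ex_in_conv)
  then have "supdist a (lerp s a b) < e" using supdist_lerp[OF a b, of s] by auto
  then show ?thesis using s lerp_G0[OF a b, of s] by auto
qed

text \<open>The hypotheses on \<open>N\<close> are those of the conditions \<open>g \<notin> span\<close>: open, satisfiable, and
  violated at only finitely many points of any segment ending where it holds.\<close>
locale nonspan_cond =
  fixes N :: "(real \<Rightarrow> real) \<Rightarrow> bool"
  assumes open_N: "open_cond N"
    and ex_N: "\<exists>b\<in>G0. N b"
    and finite_lerp_not_N: "\<And>a b. a \<in> G0 \<Longrightarrow> b \<in> G0 \<Longrightarrow> N b \<Longrightarrow> finite {s. \<not> N (lerp s a b)}"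
begin

lemma open_signs:
  assumes "finite I" "\<And>i. i \<in> I \<Longrightarrow> p i \<in> G0"
  shows "open_cond (\<lambda>g. N g \<and> (\<forall>i\<in>I. has_sign (pos i) (Q g (p i))))"
proof (rule open_cond_conj[OF open_N])
  show "open_cond (\<lambda>g. \<forall>i\<in>I. has_sign (pos i) (Q g (p i)))"
    using assms by (intro open_cond_ball open_cond_Q_sign)
qed

lemma ex_signs:
  assumes I: "finite I" "\<And>i. i \<in> I \<Longrightarrow> p i \<in> G0"
    and b: "b \<in> G0" "\<forall>i\<in>I. has_sign (pos i) (Q b (p i))"
  shows "\<exists>g\<in>G0. N g \<and> (\<forall>i\<in>I. has_sign (pos i) (Q g (p i)))"
proof -
  have "open_cond (\<lambda>g. \<forall>i\<in>I. has_sign (pos i) (Q g (p i)))"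
    using I by (intro open_cond_ball open_cond_Q_sign)
  then obtain e where e: "e > 0" "\<forall>g\<in>G0. supdist b g < e \<longrightarrow> (\<forall>i\<in>I. has_sign (pos i) (Q g (p i)))"
    using b unfolding open_cond_def' by blast
  obtain c where c: "c \<in> G0" "N c" using ex_N by blast
  obtain s where "s \<notin> {s. \<not> N (lerp s b c)}" "lerp s b c \<in> G0" "supdist b (lerp s b c) < e"
    using ex_lerp_near[OF b(1) c(1) finite_lerp_not_N[OF b(1) c] e(1)] by blast
  then show ?thesis using e(2) by blast
qed

lemma open_Q_nonzero:
  assumes "finite I" "\<And>i. i \<in> I \<Longrightarrow> p i \<in> G0"
  shows "open_cond (\<lambda>g. N g \<and> (\<forall>i\<in>I. Q g (p i) \<noteq> 0))"
proof (rule open_cond_conj[OF open_N])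
  show "open_cond (\<lambda>g. \<forall>i\<in>I. Q g (p i) \<noteq> 0)"
    using assms by (intro open_cond_ball open_cond_Q_nonzero)
qed

text \<open>Along the segment from any \<open>g\<^sub>0\<close> to a good point, \<open>Q (lerp s g\<^sub>0 b) (p i)\<close> is affine
  in \<open>s\<close> and nonzero at \<open>s = 1\<close>, so only finitely many \<open>s\<close> are bad.\<close>
lemma dense_Q_nonzero:
  assumes I: "finite I" "\<And>i. i \<in> I \<Longrightarrow> p i \<in> G0"
    and b: "b \<in> G0" "N b" "\<forall>i\<in>I. Q b (p i) \<noteq> 0"
  shows "dense_in_G0 {g \<in> G0. N g \<and> (\<forall>i\<in>I. Q g (p i) \<noteq> 0)}"
  unfolding dense_in_G0_def
proof (intro ballI allI impI)
  fix g0 and e :: real assume g0: "g0 \<in> G0" and e: "e > 0"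
  have "finite {s. Q (lerp s g0 b) (p i) = 0}" if i: "i \<in> I" for i
  proof (rule finite_subset)
    show "{s. Q (lerp s g0 b) (p i) = 0} \<subseteq> {Q g0 (p i) / (Q g0 (p i) - Q b (p i))}"
    proof
      fix s assume "s \<in> {s. Q (lerp s g0 b) (p i) = 0}"
      then have zero: "(1 - s) * Q g0 (p i) + s * Q b (p i) = 0"
        using Q_lerp[OF g0 b(1) I(2)[OF i]] by simp
      then have lin: "s * (Q g0 (p i) - Q b (p i)) = Q g0 (p i)" by (simp add: algebra_simps)
      then have "Q g0 (p i) - Q b (p i) \<noteq> 0" using b(3) i by auto
      then show "s \<in> {Q g0 (p i) / (Q g0 (p i) - Q b (p i))}" using lin by (simp add: eq_divide_eq)
    qed
  qed simp
  then have "finite ({s. \<not> N (lerp s g0 b)} \<union> (\<Union>i\<in>I. {s. Q (lerp s g0 b) (p i) = 0}))"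
    using finite_lerp_not_N[OF g0 b(1,2)] I(1) by simp
  then obtain s where "s \<notin> {s. \<not> N (lerp s g0 b)} \<union> (\<Union>i\<in>I. {s. Q (lerp s g0 b) (p i) = 0})"
    "lerp s g0 b \<in> G0" "supdist g0 (lerp s g0 b) < e"
    using ex_lerp_near[OF g0 b(1) _ e] by blast
  then show "\<exists>g\<in>{g \<in> G0. N g \<and> (\<forall>i\<in>I. Q g (p i) \<noteq> 0)}. supdist g0 g < e"
    by blast
qed

end

lemma open_cond_not_in_span_image:
  assumes fam: "cont_indep_family K p"
    and cont: "\<And>g. g \<in> G0 \<Longrightarrow> continuous_on {-1..1} (T g)"
    and close: "\<And>g g' t. g \<in> G0 \<Longrightarrow> g' \<in> G0 \<Longrightarrow> t \<in> {-1..1} \<Longrightarrow> \<bar>T g t - T g' t\<bar> \<le> supdist g g'"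
  shows "open_cond (\<lambda>g. \<not> in_span K p (T g))"
  unfolding open_cond_def'
proof (intro ballI impI)
  fix g assume g: "g \<in> G0" and N: "\<not> in_span K p (T g)"
  obtain e where e: "e > 0" "\<forall>u'. continuous_on {-1..1} u' \<longrightarrow> (\<forall>t\<in>{-1..1}. \<bar>T g t - u' t\<bar> < e) \<longrightarrow> \<not> in_span K p u'"
    using cont_indep_family.not_in_span_open[OF fam cont[OF g] N] by blast
  have "\<not> in_span K p (T g')" if "g' \<in> G0" "supdist g g' < e" for g'
    using e(2) cont[OF that(1)] close[OF g that(1)] that(2) by (meson le_less_trans)
  then show "\<exists>e>0. \<forall>g'\<in>G0. supdist g g' < e \<longrightarrow> \<not> in_span K p (T g')" using e(1) by blast
qed

context cont_indep_family
begin

lemma nonspan_cond_not_in_span: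
  assumes "in_span K p (\<lambda>t. t)"
  shows "nonspan_cond (\<lambda>g. \<not> in_span K p g)"
proof
  show "open_cond (\<lambda>g. \<not> in_span K p g)"
    using open_cond_not_in_span_image[of K p "\<lambda>g. g"] cont_indep_family_axioms
    by (simp add: G0_cont abs_le_supdist)
qed (use ex_G0_not_in_span[OF assms] finite_lerp_in_span in auto)

lemma nonspan_cond_even_part_not_in_span: "nonspan_cond (\<lambda>g. \<not> in_span K p (even_part g))"
proof
  have "\<bar>even_part g t - even_part g' t\<bar> \<le> supdist g g'" if "g \<in> G0" "g' \<in> G0" "t \<in> {-1..1}" for g g' t
    using abs_le_supdist[OF that(1,2), of t] abs_le_supdist[OF that(1,2), of "-t"] that(3)
    by (simp add: even_part_def abs_le_iff field_simps)
  then show "open_cond (\<lambda>g. \<not> in_span K p (even_part g))"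
    using open_cond_not_in_span_image[of K p even_part] cont_indep_family_axioms
    by (simp add: G0_cont even_part_cont)
qed (use ex_G0_even_part_not_in_span finite_lerp_in_span in \<open>auto simp: even_part_lerp\<close>)

end

lemma G0_fun_upd:
  fixes n :: nat
  assumes "\<forall>k\<in>{1..n}. f k \<in> G0" "g \<in> G0"
  shows "\<forall>k\<in>{1..n+1}. (f(n+1 := g)) k \<in> G0"
proof
  fix k assume "k \<in> {1..n+1}"
  then have "k = n + 1 \<or> k \<in> {1..n}" by auto
  then show "(f(n+1 := g)) k \<in> G0" using assms by auto
qed

lemma Q_pairwise_nonzero_fun_upd:
  fixes n :: nat
  assumes G: "\<forall>k\<in>{1..n}. f k \<in> G0" and g: "g \<in> G0"
    and Qf: "\<forall>i\<in>{1..n}. \<forall>j\<in>{1..n}. i \<noteq> j \<longrightarrow> Q (f i) (f j) \<noteq> 0"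
  shows "(\<forall>i\<in>{1..n+1}. \<forall>j\<in>{1..n+1}. i \<noteq> j \<longrightarrow> Q ((f(n+1 := g)) i) ((f(n+1 := g)) j) \<noteq> 0)
    \<longleftrightarrow> (\<forall>i\<in>{1..n}. Q g (f i) \<noteq> 0)"
proof
  assume A: "\<forall>i\<in>{1..n+1}. \<forall>j\<in>{1..n+1}. i \<noteq> j \<longrightarrow> Q ((f(n+1 := g)) i) ((f(n+1 := g)) j) \<noteq> 0"
  show "\<forall>i\<in>{1..n}. Q g (f i) \<noteq> 0"
  proof
    fix i assume i: "i \<in> {1..n}"
    then have "n+1 \<in> {1..n+1}" "i \<in> {1..n+1}" "n+1 \<noteq> i" by auto
    then have "Q ((f(n+1 := g)) (n+1)) ((f(n+1 := g)) i) \<noteq> 0" using A by blast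
    then show "Q g (f i) \<noteq> 0" using i by simp
  qed
next
  assume B: "\<forall>i\<in>{1..n}. Q g (f i) \<noteq> 0"
  show "\<forall>i\<in>{1..n+1}. \<forall>j\<in>{1..n+1}. i \<noteq> j \<longrightarrow> Q ((f(n+1 := g)) i) ((f(n+1 := g)) j) \<noteq> 0"
  proof (intro ballI impI)
    fix i j assume ij: "i \<in> {1..n+1}" "j \<in> {1..n+1}" "i \<noteq> j"
    consider "i = n+1" "j \<in> {1..n}" | "j = n+1" "i \<in> {1..n}" | "i \<in> {1..n}" "j \<in> {1..n}"
      using ij by fastforce
    then show "Q ((f(n+1 := g)) i) ((f(n+1 := g)) j) \<noteq> 0"
      by cases (use B Qf ij Q_antisym_G0[OF _ g, of "f i"] G in auto)
  qed
qed

lemma GEN_fun_upd_iff: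
  assumes f: "f \<in> GEN n" and g: "g \<in> G0"
  shows "f(n+1 := g) \<in> GEN (n+1)
    \<longleftrightarrow> \<not> in_span {0..n} (id_family n f) g \<and> (\<forall>i\<in>{1..n}. Q g (f i) \<noteq> 0)"
proof -
  have G: "\<forall>k\<in>{1..n}. f k \<in> G0" and indep: "lin_indep_on {0..n} (id_family n f)"
    and Qf: "\<forall>i\<in>{1..n}. \<forall>j\<in>{1..n}. i \<noteq> j \<longrightarrow> Q (f i) (f j) \<noteq> 0"
    using f unfolding GEN_iff by auto
  have "{0..n+1} = insert (n+1) {0..n}" by auto
  then have "lin_indep_on {0..n+1} (id_family (n+1) (f(n+1 := g)))
      \<longleftrightarrow> lin_indep_on (insert (n+1) {0..n}) ((id_family n f)(n+1 := g))"
    by (simp only:) (intro lin_indep_on_cong, auto simp: id_family_def)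
  also have "\<dots> \<longleftrightarrow> \<not> in_span {0..n} (id_family n f) g"
    by (rule lin_indep_on_insert_iff[OF _ _ indep]) auto
  finally show ?thesis
    unfolding GEN_iff[of "f(n+1 := g)"] using G0_fun_upd[OF G g] Q_pairwise_nonzero_fun_upd[OF G g Qf]
    by blast
qed

lemma GENp_fun_upd_iff:
  assumes f: "f \<in> GENp n" and g: "g \<in> G0"
  shows "f(n+1 := g) \<in> GENp (n+1)
    \<longleftrightarrow> \<not> in_span {1..n} (\<lambda>k. even_part (f k)) (even_part g) \<and> (\<forall>i\<in>{1..n}. Q g (f i) \<noteq> 0)"
proof -
  have G: "\<forall>k\<in>{1..n}. f k \<in> G0" and indep: "lin_indep_on {1..n} (\<lambda>k. even_part (f k))"
    and Qf: "\<forall>i\<in>{1..n}. \<forall>j\<in>{1..n}. i \<noteq> j \<longrightarrow> Q (f i) (f j) \<noteq> 0"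
    using f unfolding GENp_iff by auto
  have "{1..n+1} = insert (n+1) {1..n}" by auto
  then have "lin_indep_on {1..n+1} (\<lambda>k. even_part ((f(n+1 := g)) k))
      \<longleftrightarrow> lin_indep_on (insert (n+1) {1..n}) ((\<lambda>k. even_part (f k))(n+1 := even_part g))"
    by (simp only:) (intro lin_indep_on_cong, auto)
  also have "\<dots> \<longleftrightarrow> \<not> in_span {1..n} (\<lambda>k. even_part (f k)) (even_part g)"
    by (rule lin_indep_on_insert_iff[OF _ _ indep]) auto
  finally show ?thesis
    unfolding GENp_iff[of "f(n+1 := g)"] using G0_fun_upd[OF G g] Q_pairwise_nonzero_fun_upd[OF G g Qf]
    by blast
qed

lemma mem_Rel_fun_upd:
  fixes n :: nat
  assumes G: "\<forall>k\<in>{1..n}. f k \<in> G0" and g: "g \<in> G0"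
  shows "(a, b) \<in> Rel (n+1) (f(n+1 := g)) \<longleftrightarrow> (a, b) \<in> Rel n f
    \<or> (a \<in> {1..n} \<and> b = n+1 \<and> Q g (f a) > 0) \<or> (a = n+1 \<and> b \<in> {1..n} \<and> Q g (f b) < 0)"
proof -
  have "Q g g = 0" using Q_antisym_G0[OF g g] by simp
  moreover have "Q (f b) g = - Q g (f b)" if "b \<in> {1..n}" using Q_antisym_G0[OF _ g] G that by blast
  moreover have "a \<in> {1..n+1} \<longleftrightarrow> a \<in> {1..n} \<or> a = n+1" for a :: nat by auto
  ultimately show ?thesis unfolding Rel_def by auto
qed

lemma mem_tournament_extension:
  fixes n :: nat
  assumes tour: "tournament {1..n+1} R" and restr: "R \<inter> ({1..n} \<times> {1..n}) = Rel n f"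
  shows "(a, b) \<in> R \<longleftrightarrow> (a, b) \<in> Rel n f
    \<or> (a \<in> {1..n} \<and> b = n+1 \<and> (a, n+1) \<in> R) \<or> (a = n+1 \<and> b \<in> {1..n} \<and> (b, n+1) \<notin> R)"
proof -
  have T: "R \<subseteq> {1..n+1} \<times> {1..n+1}" "\<forall>i. (i, i) \<notin> R"
    "\<forall>i\<in>{1..n+1}. \<forall>j\<in>{1..n+1}. i \<noteq> j \<longrightarrow> ((i, j) \<in> R \<longleftrightarrow> (j, i) \<notin> R)"
    using tour unfolding tournament_def by blast+
  have "(n+1, b) \<in> R \<longleftrightarrow> (b, n+1) \<notin> R" if "b \<in> {1..n}" for b
  proof -
    have "n+1 \<in> {1..n+1}" "b \<in> {1..n+1}" "n+1 \<noteq> b" using that by auto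
    then show ?thesis using T(3) by blast
  qed
  then have R: "R \<subseteq> {1..n+1} \<times> {1..n+1}" "(n+1, n+1) \<notin> R"
    "\<And>b. b \<in> {1..n} \<Longrightarrow> (n+1, b) \<in> R \<longleftrightarrow> (b, n+1) \<notin> R"
    using T by blast+
  have Rel: "(a, b) \<in> Rel n f \<Longrightarrow> a \<in> {1..n} \<and> b \<in> {1..n}" by (simp add: Rel_def)
  consider "a \<in> {1..n}" "b \<in> {1..n}" | "a \<in> {1..n}" "b = n+1" | "a = n+1" "b \<in> {1..n}"
    | "a = n+1" "b = n+1" | "(a, b) \<notin> {1..n+1} \<times> {1..n+1}"
  proof -
    have "{1..n+1} = insert (n+1) {1..n}" by auto
    then show ?thesis using that by blast
  qed
  then show ?thesis
  proof cases
    case 1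
    then have "(a, b) \<in> R \<longleftrightarrow> (a, b) \<in> Rel n f" using restr by blast
    then show ?thesis using 1 by simp
  next
    case 2
    then have "(a, b) \<notin> Rel n f" using Rel by auto
    then show ?thesis using 2 by auto
  next
    case 3
    then have "(a, b) \<notin> Rel n f" using Rel by auto
    then show ?thesis using 3 R(3) by auto
  next
    case 4
    then have "(a, b) \<notin> Rel n f" using Rel by auto
    then show ?thesis using 4 R(2) by auto
  next
    case 5
    then have "(a, b) \<notin> R" "(a, b) \<notin> Rel n f" using Rel R(1) by auto
    then show ?thesis using 5 by auto
  qed
qed

lemma Rel_fun_upd_eq_iff:
  fixes n :: nat
  assumes G: "\<forall>k\<in>{1..n}. f k \<in> G0" and g: "g \<in> G0"
    and tour: "tournament {1..n+1} R" and restr: "R \<inter> ({1..n} \<times> {1..n}) = Rel n f"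
  shows "(\<forall>i\<in>{1..n}. Q g (f i) \<noteq> 0) \<and> Rel (n+1) (f(n+1 := g)) = R
    \<longleftrightarrow> (\<forall>i\<in>{1..n}. has_sign ((i, n+1) \<in> R) (Q g (f i)))"
    (is "?lhs \<longleftrightarrow> ?rhs")
proof
  assume lhs: ?lhs
  have "Q g (f i) > 0 \<longleftrightarrow> (i, n+1) \<in> R" "Q g (f i) \<noteq> 0" if "i \<in> {1..n}" for i
  proof -
    have "(i, n+1) \<notin> Rel n f" by (simp add: Rel_def)
    then show "Q g (f i) > 0 \<longleftrightarrow> (i, n+1) \<in> R"
      using that lhs mem_Rel_fun_upd[OF G g, of i "n+1"] by simp
    show "Q g (f i) \<noteq> 0" using that lhs by blast
  qed
  then show ?rhs unfolding has_sign_def by (metis linorder_neqE_linordered_idom not_less_iff_gr_or_eq)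
next
  assume rhs: ?rhs
  have pos: "Q g (f i) > 0 \<longleftrightarrow> (i, n+1) \<in> R" and neg: "Q g (f i) < 0 \<longleftrightarrow> (i, n+1) \<notin> R"
    and nz: "Q g (f i) \<noteq> 0" if "i \<in> {1..n}" for i
  proof -
    have "has_sign ((i, n+1) \<in> R) (Q g (f i))" using rhs that by blast
    then show "Q g (f i) > 0 \<longleftrightarrow> (i, n+1) \<in> R" "Q g (f i) < 0 \<longleftrightarrow> (i, n+1) \<notin> R" "Q g (f i) \<noteq> 0"
      by (cases "(i, n+1) \<in> R"; simp add: has_sign_def)+
  qed
  have eq: "(a, b) \<in> Rel (n+1) (f(n+1 := g)) \<longleftrightarrow> (a, b) \<in> R" for a b
    unfolding mem_Rel_fun_upd[OF G g, of a b] mem_tournament_extension[OF tour restr, of a b]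
    using pos[of a] neg[of b] by auto
  have "Rel (n+1) (f(n+1 := g)) = R"
  proof (rule set_eqI)
    fix x :: "nat \<times> nat"
    show "x \<in> Rel (n+1) (f(n+1 := g)) \<longleftrightarrow> x \<in> R" using eq[of "fst x" "snd x"] by simp
  qed
  then show ?lhs using nz by blast
qed

lemma in_span_id_family: "in_span {0..n} (id_family n f) (\<lambda>t. t)"
proof -
  have "(\<Sum>k\<in>{0..n}. (if k = 0 then 1 else 0) * id_family n f k t)
      = (\<Sum>k\<in>{0..n}. if k = 0 then id_family n f k t else 0)" for t
    by (intro sum.cong) auto
  then have "t = (\<Sum>k\<in>{0..n}. (if k = 0 then 1 else 0) * id_family n f k t)" for t
    by (simp add: sum.delta id_family_def)
  then show ?thesis unfolding in_span_def by (intro exI[of _ "\<lambda>k. if k = 0 then 1 else 0"]) simp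
qed

lemma cont_indep_family_GEN:
  assumes "f \<in> GEN n"
  shows "cont_indep_family {0..n} (id_family n f)"
proof
  show "continuous_on {-1..1} (id_family n f k)" for k
    using assms G0_cont[OF id_family_G0] unfolding GEN_iff by blast
  show "lin_indep_on {0..n} (id_family n f)" using assms unfolding GEN_iff by blast
qed simp

lemma cont_indep_family_GENp:
  assumes "f \<in> GENp n"
  shows "cont_indep_family {1..n} (\<lambda>k. even_part (f k))"
proof
  show "continuous_on {-1..1} (even_part (f k))" if "k \<in> {1..n}" for k
    using assms that even_part_cont[OF G0_cont] unfolding GENp_iff by blast
  show "lin_indep_on {1..n} (\<lambda>k. even_part (f k))" using assms unfolding GENp_iff by blast
qed simp

lemma ex_G0_signs:
  assumes "f \<in> GEN n"
  shows "\<exists>b\<in>G0. \<forall>i\<in>{1..n}. has_sign (pos i) (Q b (f i))"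
proof -
  obtain b d where "b \<in> G0" "d > 0" "\<forall>i\<in>{1..n}. Q b (f i) = d * (if pos i then 1 else -1)"
    using ex_G0_prescribed_Q[of n f "\<lambda>i. if pos i then 1 else -1"] assms unfolding GEN_iff by blast
  then show ?thesis by (intro bexI[of _ b]) (auto simp: has_sign_def)
qed

lemma extension_sets:
  fixes n :: nat
  assumes N: "nonspan_cond N" and G: "\<forall>k\<in>{1..n}. f k \<in> G0"
    and ext: "\<And>g. g \<in> G0 \<Longrightarrow> f(n+1 := g) \<in> X \<longleftrightarrow> N g \<and> (\<forall>i\<in>{1..n}. Q g (f i) \<noteq> 0)"
    and signs: "\<exists>b\<in>G0. \<forall>i\<in>{1..n}. has_sign ((i, n+1) \<in> R) (Q b (f i))"
    and tour: "tournament {1..n+1} R" and restr: "R \<inter> ({1..n} \<times> {1..n}) = Rel n f"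
  shows "(open_in_G0 {g \<in> G0. f(n+1 := g) \<in> X} \<and> dense_in_G0 {g \<in> G0. f(n+1 := g) \<in> X})
    \<and> (open_in_G0 {g \<in> G0. f(n+1 := g) \<in> X \<and> Rel (n+1) (f(n+1 := g)) = R}
       \<and> {g \<in> G0. f(n+1 := g) \<in> X \<and> Rel (n+1) (f(n+1 := g)) = R} \<noteq> {})"
proof -
  interpret nonspan_cond N by (rule N)
  let ?signs = "\<lambda>g. \<forall>i\<in>{1..n}. has_sign ((i, n+1) \<in> R) (Q g (f i))"
  have sets: "{g \<in> G0. f(n+1 := g) \<in> X} = {g \<in> G0. N g \<and> (\<forall>i\<in>{1..n}. Q g (f i) \<noteq> 0)}"
    "{g \<in> G0. f(n+1 := g) \<in> X \<and> Rel (n+1) (f(n+1 := g)) = R} = {g \<in> G0. N g \<and> ?signs g}"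
    using ext Rel_fun_upd_eq_iff[OF G _ tour restr] by blast+
  obtain b0 where "b0 \<in> G0" "?signs b0" using signs by blast
  then obtain b where b: "b \<in> G0" "N b" "?signs b"
    using ex_signs[of "{1..n}" f b0 "\<lambda>i. (i, n+1) \<in> R"] G by auto
  then have "\<forall>i\<in>{1..n}. Q b (f i) \<noteq> 0" using has_sign_nonzero by blast
  then show ?thesis
    unfolding sets open_cond_def[symmetric] using b G
    by (auto intro!: open_Q_nonzero dense_Q_nonzero open_signs)
qed

theorem theorem4p11:
  fixes n :: nat and f :: "nat \<Rightarrow> real \<Rightarrow> real" and R :: "(nat \<times> nat) set"
  assumes fgen: "f \<in> GEN n"
    and tour: "tournament {1..n+1} R"
    and restr: "R \<inter> ({1..n} \<times> {1..n}) = Rel n f"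
  shows
    "(open_in_G0 {g \<in> G0. f(n+1 := g) \<in> GEN (n+1)}
        \<and> dense_in_G0 {g \<in> G0. f(n+1 := g) \<in> GEN (n+1)})
   \<and> (f \<in> GENp n \<longrightarrow>
        open_in_G0 {g \<in> G0. f(n+1 := g) \<in> GENp (n+1)}
        \<and> dense_in_G0 {g \<in> G0. f(n+1 := g) \<in> GENp (n+1)})
   \<and> (open_in_G0 {g \<in> G0. f(n+1 := g) \<in> GEN (n+1) \<and> Rel (n+1) (f(n+1 := g)) = R}
        \<and> {g \<in> G0. f(n+1 := g) \<in> GEN (n+1) \<and> Rel (n+1) (f(n+1 := g)) = R} \<noteq> {})
   \<and> (f \<in> GENp n \<longrightarrow>
        open_in_G0 {g \<in> G0. f(n+1 := g) \<in> GENp (n+1) \<and> Rel (n+1) (f(n+1 := g)) = R}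
        \<and> {g \<in> G0. f(n+1 := g) \<in> GENp (n+1) \<and> Rel (n+1) (f(n+1 := g)) = R} \<noteq> {})"
proof -
  have G: "\<forall>k\<in>{1..n}. f k \<in> G0" using fgen unfolding GEN_def by blast
  note signs = ex_G0_signs[OF fgen, of "\<lambda>i. (i, n+1) \<in> R"]
  have gen: "nonspan_cond (\<lambda>g. \<not> in_span {0..n} (id_family n f) g)"
    using cont_indep_family.nonspan_cond_not_in_span[OF cont_indep_family_GEN[OF fgen] in_span_id_family] .
  note GEN_parts = extension_sets[OF gen G GEN_fun_upd_iff[OF fgen] signs tour restr]
  have GENp_parts:
    "(open_in_G0 {g \<in> G0. f(n+1 := g) \<in> GENp (n+1)} \<and> dense_in_G0 {g \<in> G0. f(n+1 := g) \<in> GENp (n+1)})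
     \<and> (open_in_G0 {g \<in> G0. f(n+1 := g) \<in> GENp (n+1) \<and> Rel (n+1) (f(n+1 := g)) = R}
        \<and> {g \<in> G0. f(n+1 := g) \<in> GENp (n+1) \<and> Rel (n+1) (f(n+1 := g)) = R} \<noteq> {})"
    if fp: "f \<in> GENp n"
    using cont_indep_family.nonspan_cond_even_part_not_in_span[OF cont_indep_family_GENp[OF fp]]
    by (rule extension_sets[OF _ G GENp_fun_upd_iff[OF fp] signs tour restr])
  show ?thesis using GEN_parts GENp_parts by blast
qed

end
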